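(* For every choice of $s,i,k=1,\dots,n$, the contravariant Christoffel symbol $\Gamma^{si}_k(u)$ of $g$, regarded as a homogeneous polynomial in the $p$-variables via $u_m=\sum_{1\le i_1<\dots<i_m\le n}p_{i_1}^2\cdots p_{i_m}^2$, satisfies $\deg\big(\Gamma^{si}_k(u)\big)<4n-4$.
   Context: $n\ge2$. $g$ is the cometric $g^{ij}(p)=\frac{1-\delta^{ij}}{p_ip_j}$ on $\mathbb{C}^n$ (inverse metric $g_{ij}(p)=(\frac{1}{n-1}-\delta_{ij})p_ip_j$), invariant under $B_n$ acting by permutations and sign changes of coordinates. In the coordinates $u_1,\dots,u_n$ on the orbit space, $g^{ij}(u)=\sum_{k,l}g^{kl}(p)\frac{\partial u_i}{\partial p_k}\frac{\partial u_j}{\partial p_l}$, $\Gamma^j_{sk}(u)$ are the Christoffel symbols of the Levi-Civita connection of $g$, and $\Gamma^{si}_k(u)=-\sum_j g^{sj}(u)\Gamma^i_{jk}(u)$ (these are polynomials in $u$); degrees are in the $p$-variables, with $\deg u_m=2m$. *)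

theory Defs
  imports "HOL-Analysis.Analysis"
begin

text \<open>Points of C^n are functions p :: nat => complex, only the coordinates p 1, ..., p n matter.
  Likewise points of the orbit space are u :: nat => complex with coordinates u 1, ..., u n.\<close>

definition pd :: "((nat \<Rightarrow> complex) \<Rightarrow> complex) \<Rightarrow> (nat \<Rightarrow> complex) \<Rightarrow> nat \<Rightarrow> complex" where
  "pd F x a = deriv (\<lambda>t. F (x(a := t))) (x a)"

definition uC :: "nat \<Rightarrow> nat \<Rightarrow> (nat \<Rightarrow> complex) \<Rightarrow> complex" where
  "uC n m p = (\<Sum>S\<in>{S. S \<subseteq> {1..n} \<and> card S = m}. \<Prod>i\<in>S. (p i)^2)"

definition gP :: "nat \<Rightarrow> nat \<Rightarrow> (nat \<Rightarrow> complex) \<Rightarrow> complex" where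
  "gP k l p = (if k = l then 0 else 1 / (p k * p l))"

definition gU :: "nat \<Rightarrow> nat \<Rightarrow> nat \<Rightarrow> (nat \<Rightarrow> complex) \<Rightarrow> complex" where
  "gU n i j u = (SOME v. \<exists>p. (\<forall>k\<in>{1..n}. p k \<noteq> 0) \<and> (\<forall>m\<in>{1..n}. uC n m p = u m) \<and>
      v = (\<Sum>k=1..n. \<Sum>l=1..n. gP k l p * pd (uC n i) p k * pd (uC n j) p l))"

definition gL :: "nat \<Rightarrow> (nat \<Rightarrow> complex) \<Rightarrow> nat \<Rightarrow> nat \<Rightarrow> complex" where
  "gL n u = (SOME G. \<forall>i\<in>{1..n}. \<forall>k\<in>{1..n}.
      (\<Sum>j=1..n. gU n i j u * G j k) = (if i = k then 1 else 0))"

definition Gam :: "nat \<Rightarrow> nat \<Rightarrow> nat \<Rightarrow> nat \<Rightarrow> (nat \<Rightarrow> complex) \<Rightarrow> complex" where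
  "Gam n j s k u = (1/2) * (\<Sum>l=1..n. gU n j l u *
      (pd (\<lambda>v. gL n v l k) u s + pd (\<lambda>v. gL n v l s) u k - pd (\<lambda>v. gL n v s k) u l))"

definition GamC :: "nat \<Rightarrow> nat \<Rightarrow> nat \<Rightarrow> nat \<Rightarrow> (nat \<Rightarrow> complex) \<Rightarrow> complex" where
  "GamC n s i k u = - (\<Sum>j=1..n. gU n s j u * Gam n i j k u)"

text \<open>Generic points of C^n (free B_n-orbits): all p_i nonzero and p_i^2 pairwise distinct.\<close>
definition generic :: "nat \<Rightarrow> (nat \<Rightarrow> complex) \<Rightarrow> bool" where
  "generic n p \<longleftrightarrow> (\<forall>i\<in>{1..n}. p i \<noteq> 0) \<and>
      (\<forall>i\<in>{1..n}. \<forall>j\<in>{1..n}. i \<noteq> j \<longrightarrow> (p i)^2 \<noteq> (p j)^2)"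

definition exps_below :: "nat \<Rightarrow> nat \<Rightarrow> (nat \<Rightarrow> nat) set" where
  "exps_below n d = {\<alpha>. (\<forall>j. j \<notin> {1..n} \<longrightarrow> \<alpha> j = 0) \<and> sum \<alpha> {1..n} < d}"

end

theory Submission
  imports Defs "HOL-Complex_Analysis.Conformal_Mappings" "Jordan_Normal_Form.Determinant"
    "HOL-Computational_Algebra.Polynomial"
begin

text \<open>Put \<open>a\<^sub>j = p\<^sub>j\<^sup>2\<close>, so that \<open>u\<^sub>m\<close> is the \<open>m\<close>-th elementary symmetric function of \<open>a\<close>.
  In the coordinates \<open>a\<close> the cometric is the constant matrix \<open>C = 4 (1 - \<delta>)\<close>, so in the
  coordinates \<open>u\<close> it is \<open>G = A\<^sup>T C A\<close>, where the inverse \<open>B\<close> of the Jacobian \<open>A = \<partial>u/\<partial>a\<close>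
  is given by Lagrange interpolation, \<open>B\<^sub>k\<^sub>c = (-1)\<^sup>k\<^sup>-\<^sup>1 a\<^sub>c\<^sup>n\<^sup>-\<^sup>k / \<Prod>\<^sub>e\<^sub>\<noteq>\<^sub>c (a\<^sub>c - a\<^sub>e)\<close>.
  Differentiating the metric \<open>L = G\<^sup>-\<^sup>1\<close> along the coordinate lines of \<open>u\<close> (lifted to \<open>a\<close> by
  the holomorphic inverse function theorem) via \<open>\<partial>L = - L (\<partial>G) L\<close> and substituting into the
  Koszul formula, the symmetric terms cancel and \<open>\<Gamma>\<^sup>s\<^sup>i\<^sub>k = \<Sum>\<^sub>d B\<^sub>k\<^sub>d W(a\<^sub>d, a)\<close> for a polynomial
  \<open>W\<close> of degree at most \<open>s + i - 3 \<le> 2n - 3\<close>. Expanding \<open>W\<close> in powers of \<open>a\<^sub>d\<close> turns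
  \<open>\<Sum>\<^sub>d B\<^sub>k\<^sub>d a\<^sub>d\<^sup>m\<close> into divided differences of powers, which are polynomials of degree
  \<open>m + 1 - n\<close>. Hence \<open>\<Gamma>\<^sup>s\<^sup>i\<^sub>k\<close> is a polynomial of degree at most \<open>2n - 3\<close> in \<open>a\<close>, i.e. of
  degree at most \<open>4n - 6\<close> in \<open>p\<close>.\<close>

section \<open>Polynomial functions in finitely many variables\<close>

definition monomial_on :: "nat set \<Rightarrow> (nat \<Rightarrow> nat) \<Rightarrow> (nat \<Rightarrow> complex) \<Rightarrow> complex" where
  "monomial_on I \<alpha> a = (\<Prod>j\<in>I. a j ^ \<alpha> j)"

definition exps_upto :: "nat set \<Rightarrow> nat \<Rightarrow> (nat \<Rightarrow> nat) set" where
  "exps_upto I D = {\<alpha>. (\<forall>j. j \<notin> I \<longrightarrow> \<alpha> j = 0) \<and> sum \<alpha> I \<le> D}"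

definition poly_fun :: "nat set \<Rightarrow> nat \<Rightarrow> ((nat \<Rightarrow> complex) \<Rightarrow> complex) set" where
  "poly_fun I D = {f. \<exists>c. \<forall>a. f a = (\<Sum>\<alpha>\<in>exps_upto I D. c \<alpha> * monomial_on I \<alpha> a)}"

lemma finite_exps_upto:
  assumes "finite I"
  shows "finite (exps_upto I D)"
proof (rule finite_subset)
  have "\<alpha> x \<le> D" if "\<alpha> \<in> exps_upto I D" "x \<in> I" for \<alpha> x
    using that member_le_sum[of x I \<alpha>] assms by (simp add: exps_upto_def)
  then show "exps_upto I D \<subseteq> {\<alpha>. \<forall>x. (x \<in> I \<longrightarrow> \<alpha> x \<in> {0..D}) \<and> (x \<notin> I \<longrightarrow> \<alpha> x = 0)}"
    by (auto simp: exps_upto_def)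
  show "finite {\<alpha>. \<forall>x. (x \<in> I \<longrightarrow> \<alpha> x \<in> {0..D}) \<and> (x \<notin> I \<longrightarrow> \<alpha> x = (0::nat))}"
    by (intro finite_set_of_finite_funs assms) simp
qed

lemma exps_upto_mono: "D \<le> D' \<Longrightarrow> exps_upto I D \<subseteq> exps_upto I D'"
  by (auto simp: exps_upto_def)

lemma monomial_on_add: "monomial_on I (\<lambda>j. \<alpha> j + \<beta> j) a = monomial_on I \<alpha> a * monomial_on I \<beta> a"
  by (simp add: monomial_on_def power_add prod.distrib)

lemma poly_funI: "(\<And>a. f a = (\<Sum>\<alpha>\<in>exps_upto I D. c \<alpha> * monomial_on I \<alpha> a)) \<Longrightarrow> f \<in> poly_fun I D"
  unfolding poly_fun_def by blast

lemma poly_fun_mono: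
  assumes "finite I" "D \<le> D'" "f \<in> poly_fun I D"
  shows "f \<in> poly_fun I D'"
proof -
  obtain c where c: "\<And>a. f a = (\<Sum>\<alpha>\<in>exps_upto I D. c \<alpha> * monomial_on I \<alpha> a)"
    using assms(3) unfolding poly_fun_def by blast
  show ?thesis
  proof (rule poly_funI[where c = "\<lambda>\<alpha>. if \<alpha> \<in> exps_upto I D then c \<alpha> else 0"])
    fix a
    have "(\<Sum>\<alpha>\<in>exps_upto I D'. (if \<alpha> \<in> exps_upto I D then c \<alpha> else 0) * monomial_on I \<alpha> a)
        = (\<Sum>\<alpha>\<in>exps_upto I D. c \<alpha> * monomial_on I \<alpha> a)"
      by (rule sum.mono_neutral_cong_right)
        (use assms exps_upto_mono in \<open>auto simp: finite_exps_upto\<close>)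
    then show "f a = (\<Sum>\<alpha>\<in>exps_upto I D'. (if \<alpha> \<in> exps_upto I D then c \<alpha> else 0) * monomial_on I \<alpha> a)"
      by (simp add: c)
  qed
qed

lemma poly_fun_monomial_coeff:
  assumes "finite I" "\<beta> \<in> exps_upto I D"
  shows "(\<lambda>a. z * monomial_on I \<beta> a) \<in> poly_fun I D"
proof (rule poly_funI[where c = "\<lambda>\<alpha>. if \<alpha> = \<beta> then z else 0"])
  fix a
  show "z * monomial_on I \<beta> a = (\<Sum>\<alpha>\<in>exps_upto I D. (if \<alpha> = \<beta> then z else 0) * monomial_on I \<alpha> a)"
    using assms by (simp add: if_distrib[of "\<lambda>x. x * _"] sum.delta' finite_exps_upto cong: if_cong)
qed

lemma poly_fun_const:
  assumes "finite I"
  shows "(\<lambda>a. z) \<in> poly_fun I D"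
  using poly_fun_monomial_coeff[OF assms, of "\<lambda>_. 0" D z]
  by (simp add: exps_upto_def monomial_on_def)

lemma poly_fun_var:
  assumes "finite I" "j \<in> I" "1 \<le> D"
  shows "(\<lambda>a. a j) \<in> poly_fun I D"
proof -
  define e where "e = (\<lambda>x. if x = j then 1 else (0::nat))"
  have "e \<in> exps_upto I D"
    using assms by (auto simp: e_def exps_upto_def)
  moreover have "monomial_on I e a = a j" for a
    using assms by (simp add: monomial_on_def e_def if_distrib[of "\<lambda>k. a _ ^ k"] prod.delta' cong: if_cong)
  ultimately show ?thesis
    using poly_fun_monomial_coeff[OF assms(1), of e D 1] by simp
qed

lemma poly_fun_add:
  assumes "f \<in> poly_fun I D" "g \<in> poly_fun I D"
  shows "(\<lambda>a. f a + g a) \<in> poly_fun I D"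
proof -
  obtain c where c: "\<And>a. f a = (\<Sum>\<alpha>\<in>exps_upto I D. c \<alpha> * monomial_on I \<alpha> a)"
    using assms(1) unfolding poly_fun_def by blast
  obtain d where d: "\<And>a. g a = (\<Sum>\<alpha>\<in>exps_upto I D. d \<alpha> * monomial_on I \<alpha> a)"
    using assms(2) unfolding poly_fun_def by blast
  show ?thesis
    by (rule poly_funI[where c = "\<lambda>\<alpha>. c \<alpha> + d \<alpha>"]) (simp add: c d sum.distrib distrib_right)
qed

lemma poly_fun_cmult:
  assumes "f \<in> poly_fun I D"
  shows "(\<lambda>a. z * f a) \<in> poly_fun I D"
proof -
  obtain c where c: "\<And>a. f a = (\<Sum>\<alpha>\<in>exps_upto I D. c \<alpha> * monomial_on I \<alpha> a)"
    using assms unfolding poly_fun_def by blast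
  show ?thesis
    by (rule poly_funI[where c = "\<lambda>\<alpha>. z * c \<alpha>"]) (simp add: c sum_distrib_left mult.assoc)
qed

lemma poly_fun_uminus: "f \<in> poly_fun I D \<Longrightarrow> (\<lambda>a. - f a) \<in> poly_fun I D"
  using poly_fun_cmult[of f I D "-1"] by simp

lemma poly_fun_diff:
  "f \<in> poly_fun I D \<Longrightarrow> g \<in> poly_fun I D \<Longrightarrow> (\<lambda>a. f a - g a) \<in> poly_fun I D"
  using poly_fun_add[of f I D "\<lambda>a. - g a"] poly_fun_uminus[of g I D] by simp

lemma poly_fun_mult:
  assumes I: "finite I" and "f \<in> poly_fun I D1" "g \<in> poly_fun I D2"
  shows "(\<lambda>a. f a * g a) \<in> poly_fun I (D1 + D2)"
proof -
  obtain c where c: "\<And>a. f a = (\<Sum>\<alpha>\<in>exps_upto I D1. c \<alpha> * monomial_on I \<alpha> a)"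
    using assms(2) unfolding poly_fun_def by blast
  obtain d where d: "\<And>a. g a = (\<Sum>\<alpha>\<in>exps_upto I D2. d \<alpha> * monomial_on I \<alpha> a)"
    using assms(3) unfolding poly_fun_def by blast
  define S where "S = exps_upto I D1 \<times> exps_upto I D2"
  define pl where "pl = (\<lambda>x::(nat\<Rightarrow>nat)\<times>(nat\<Rightarrow>nat). (\<lambda>j. fst x j + snd x j))"
  define e where "e = (\<lambda>\<gamma>. \<Sum>x\<in>{x\<in>S. pl x = \<gamma>}. c (fst x) * d (snd x))"
  have "pl ` S \<subseteq> exps_upto I (D1 + D2)"
    by (auto simp: S_def pl_def exps_upto_def sum.distrib add_mono)
  then have group: "(\<Sum>x\<in>S. h x) = (\<Sum>\<gamma>\<in>exps_upto I (D1 + D2). \<Sum>x\<in>{x\<in>S. pl x = \<gamma>}. h x)" for h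
    by (intro sum.group[symmetric]) (auto simp: S_def finite_exps_upto I)
  show ?thesis
  proof (rule poly_funI[where c = e])
    fix a
    have "f a * g a = (\<Sum>x\<in>S. c (fst x) * d (snd x) * monomial_on I (pl x) a)"
      by (simp add: c d S_def pl_def sum_product sum.cartesian_product case_prod_beta monomial_on_add
          mult_ac)
    also have "\<dots> = (\<Sum>\<gamma>\<in>exps_upto I (D1 + D2). e \<gamma> * monomial_on I \<gamma> a)"
      unfolding group e_def sum_distrib_right by (intro sum.cong refl) auto
    finally show "f a * g a = (\<Sum>\<gamma>\<in>exps_upto I (D1 + D2). e \<gamma> * monomial_on I \<gamma> a)" .
  qed
qed

lemma poly_fun_sum:
  assumes "finite I" "finite S" "\<And>x. x \<in> S \<Longrightarrow> f x \<in> poly_fun I D"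
  shows "(\<lambda>a. \<Sum>x\<in>S. f x a) \<in> poly_fun I D"
  using assms(2,3)
  by (induction S rule: finite_induct) (auto intro: poly_fun_add poly_fun_const[OF assms(1)])

lemma poly_fun_prod:
  assumes "finite I" "finite S" "\<And>x. x \<in> S \<Longrightarrow> f x \<in> poly_fun I (d x)"
  shows "(\<lambda>a. \<Prod>x\<in>S. f x a) \<in> poly_fun I (sum d S)"
  using assms(2,3)
  by (induction S rule: finite_induct) (auto intro: poly_fun_mult[OF assms(1)] poly_fun_const[OF assms(1)])

lemma poly_fun_power:
  assumes "finite I" "f \<in> poly_fun I D"
  shows "(\<lambda>a. f a ^ m) \<in> poly_fun I (m * D)"
  by (induction m) (auto intro: poly_fun_mult[OF assms] poly_fun_const[OF assms(1)])

lemma poly_fun_monomial_on: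
  assumes "finite I"
  shows "monomial_on I \<alpha> \<in> poly_fun I (sum \<alpha> I)"
proof -
  have "(\<lambda>a. \<Prod>j\<in>I. a j ^ \<alpha> j) \<in> poly_fun I (\<Sum>j\<in>I. \<alpha> j * 1)"
    by (intro poly_fun_prod poly_fun_power poly_fun_var assms) auto
  then show ?thesis
    by (simp add: monomial_on_def[abs_def])
qed

lemma poly_fun_compose_square:
  assumes I: "finite I" and R: "R \<in> poly_fun I D"
  shows "(\<lambda>p. R (\<lambda>j. p j ^ 2)) \<in> poly_fun I (2 * D)"
proof -
  obtain c where c: "\<And>a. R a = (\<Sum>\<alpha>\<in>exps_upto I D. c \<alpha> * monomial_on I \<alpha> a)"
    using R unfolding poly_fun_def by blast
  have sq: "monomial_on I \<alpha> (\<lambda>j. p j ^ 2) = monomial_on I (\<lambda>j. 2 * \<alpha> j) p" for \<alpha> p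
    unfolding monomial_on_def by (simp add: power_mult)
  have "monomial_on I (\<lambda>j. 2 * \<alpha> j) \<in> poly_fun I (2 * D)" if "\<alpha> \<in> exps_upto I D" for \<alpha>
  proof (rule poly_fun_mono[OF I _ poly_fun_monomial_on[OF I]])
    show "(\<Sum>j\<in>I. 2 * \<alpha> j) \<le> 2 * D"
      using that by (simp add: exps_upto_def flip: sum_distrib_left)
  qed
  then have "(\<lambda>p. \<Sum>\<alpha>\<in>exps_upto I D. c \<alpha> * monomial_on I (\<lambda>j. 2 * \<alpha> j) p) \<in> poly_fun I (2 * D)"
    by (intro poly_fun_sum[OF I finite_exps_upto[OF I]] poly_fun_cmult)
  then show ?thesis
    by (simp only: c sq)
qed

section \<open>Elementary symmetric functions\<close>

definition esym :: "nat set \<Rightarrow> nat \<Rightarrow> (nat \<Rightarrow> complex) \<Rightarrow> complex" where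
  "esym J r a = (\<Sum>S\<in>{S. S \<subseteq> J \<and> card S = r}. \<Prod>i\<in>S. a i)"

lemma uC_eq_esym: "uC n m p = esym {1..n} m (\<lambda>j. p j ^ 2)"
  by (simp add: uC_def esym_def)

lemma esym_0:
  assumes "finite J"
  shows "esym J 0 a = 1"
proof -
  have "{S. S \<subseteq> J \<and> card S = 0} = {{}}"
    using assms by (auto dest: finite_subset)
  then show ?thesis
    by (simp add: esym_def)
qed

lemma esym_eq_0_if_card_less:
  assumes "finite J" "card J < r"
  shows "esym J r a = 0"
proof -
  have "{S. S \<subseteq> J \<and> card S = r} = {}"
    using assms card_mono[OF assms(1)] by (auto simp: not_le[symmetric])
  then show ?thesis
    unfolding esym_def by (simp only: sum.empty)
qed

lemma esym_cong: "(\<And>i. i \<in> J \<Longrightarrow> a i = b i) \<Longrightarrow> esym J r a = esym J r b"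
  unfolding esym_def by (intro sum.cong refl prod.cong) auto

lemma esym_insert:
  assumes J: "finite J" and c: "c \<notin> J"
  shows "esym (insert c J) (Suc r) a = esym J (Suc r) a + a c * esym J r a"
proof -
  let ?S = "\<lambda>r. {S. S \<subseteq> J \<and> card S = r}"
  have split: "{S. S \<subseteq> insert c J \<and> card S = Suc r} = ?S (Suc r) \<union> insert c ` ?S r"
  proof (intro equalityI subsetI)
    fix S assume S: "S \<in> {S. S \<subseteq> insert c J \<and> card S = Suc r}"
    then have "finite S"
      using J finite_subset[of S "insert c J"] by auto
    then show "S \<in> ?S (Suc r) \<union> insert c ` ?S r"
      using S by (cases "c \<in> S") (auto intro!: image_eqI[of S "insert c" "S - {c}"])
  next
    fix S assume "S \<in> ?S (Suc r) \<union> insert c ` ?S r"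
    moreover have "finite T \<and> c \<notin> T" if "T \<subseteq> J" for T
      using that J c finite_subset by blast
    ultimately show "S \<in> {S. S \<subseteq> insert c J \<and> card S = Suc r}"
      by auto
  qed
  have inj: "inj_on (insert c) (?S r)"
    using c by (intro inj_onI) (auto simp: insert_ident)
  have "esym (insert c J) (Suc r) a = esym J (Suc r) a + (\<Sum>S\<in>insert c ` ?S r. \<Prod>i\<in>S. a i)"
    unfolding esym_def split using J c by (intro sum.union_disjoint) auto
  also have "(\<Sum>S\<in>insert c ` ?S r. \<Prod>i\<in>S. a i) = a c * esym J r a"
    unfolding sum.reindex[OF inj] esym_def sum_distrib_left o_def
  proof (intro sum.cong refl)
    fix S assume "S \<in> ?S r"
    then have "finite S" "c \<notin> S"
      using J c finite_subset by auto
    then show "(\<Prod>i\<in>insert c S. a i) = a c * (\<Prod>i\<in>S. a i)"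
      by simp
  qed
  finally show ?thesis .
qed

lemma esym_reindex:
  assumes "inj_on \<pi> J"
  shows "esym (\<pi> ` J) r a = esym J r (\<lambda>i. a (\<pi> i))"
proof -
  have subsets: "{S. S \<subseteq> \<pi> ` J \<and> card S = r} = image \<pi> ` {S. S \<subseteq> J \<and> card S = r}"
  proof (intro equalityI subsetI)
    fix S assume S: "S \<in> {S. S \<subseteq> \<pi> ` J \<and> card S = r}"
    define T where "T = {x\<in>J. \<pi> x \<in> S}"
    have "S = \<pi> ` T" "inj_on \<pi> T"
      using S assms by (auto simp: T_def intro: inj_on_subset)
    then show "S \<in> image \<pi> ` {S. S \<subseteq> J \<and> card S = r}"
      using S card_image[of \<pi> T] by (auto simp: T_def)
  next
    fix S assume "S \<in> image \<pi> ` {S. S \<subseteq> J \<and> card S = r}"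
    then obtain T where "T \<subseteq> J" "card T = r" "S = \<pi> ` T"
      by auto
    then show "S \<in> {S. S \<subseteq> \<pi> ` J \<and> card S = r}"
      using card_image[OF inj_on_subset[OF assms]] by auto
  qed
  have inj: "inj_on (image \<pi>) {S. S \<subseteq> J \<and> card S = r}"
    using inj_on_image_Pow[OF assms] by (rule inj_on_subset) auto
  have "esym (\<pi> ` J) r a = (\<Sum>T\<in>{S. S \<subseteq> J \<and> card S = r}. prod a (\<pi> ` T))"
    unfolding esym_def subsets by (simp only: sum.reindex[OF inj] o_def)
  also have "\<dots> = esym J r (\<lambda>i. a (\<pi> i))"
    unfolding esym_def using prod.reindex[OF inj_on_subset[OF assms]] by (intro sum.cong refl) auto
  finally show ?thesis .
qed

lemma poly_fun_esym:
  assumes "finite I" "J \<subseteq> I"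
  shows "esym J r \<in> poly_fun I r"
proof -
  have fin: "finite J"
    using assms finite_subset by blast
  have "(\<lambda>a. \<Prod>i\<in>S. a i) \<in> poly_fun I r" if S: "S \<subseteq> J" "card S = r" for S
  proof -
    have "finite S"
      using S fin finite_subset by blast
    moreover have "(\<lambda>a. a i) \<in> poly_fun I 1" if "i \<in> S" for i
      using that S assms by (intro poly_fun_var) auto
    ultimately show ?thesis
      using poly_fun_prod[OF assms(1), of S "\<lambda>i a. a i" "\<lambda>_. 1"] S by simp
  qed
  then show ?thesis
    unfolding esym_def[abs_def] using fin by (intro poly_fun_sum assms) auto
qed

text \<open>Removing the variable \<open>a d\<close> from an elementary symmetric function, in a form that
  stays polynomial when \<open>a d\<close> is replaced by a new variable.\<close>

lemma esym_remove_expansion: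
  assumes "finite J" "d \<notin> J"
  shows "esym J y a = (\<Sum>q\<le>y. (- a d)^q * esym (insert d J) (y - q) a)"
proof (induction y)
  case 0
  then show ?case
    using assms by (simp add: esym_0)
next
  case (Suc y)
  have "esym J (Suc y) a = esym (insert d J) (Suc y) a - a d * esym J y a"
    using esym_insert[OF assms, of y a] by simp
  also have "\<dots> = esym (insert d J) (Suc y) a + (\<Sum>q\<le>y. (- a d)^(Suc q) * esym (insert d J) (y - q) a)"
    unfolding Suc by (simp add: sum_distrib_left mult_ac sum_negf[symmetric])
  also have "\<dots> = (\<Sum>q\<le>Suc y. (- a d)^q * esym (insert d J) (Suc y - q) a)"
    by (subst sum.atMost_Suc_shift) simp
  finally show ?case .
qed

lemma has_field_derivative_esym:
  assumes "finite J" "\<And>c. c \<in> J \<Longrightarrow> ((\<lambda>t. b t c) has_field_derivative b' c) (at t0)"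
  shows "((\<lambda>t. esym J (Suc r) (b t)) has_field_derivative
           (\<Sum>c\<in>J. b' c * esym (J - {c}) r (b t0))) (at t0)"
  using assms
proof (induction J arbitrary: r rule: finite_induct)
  case empty
  then show ?case
    by (simp add: esym_eq_0_if_card_less)
next
  case (insert c J)
  have dc: "((\<lambda>t. b t c) has_field_derivative b' c) (at t0)"
    using insert by auto
  have dJ: "((\<lambda>t. esym J (Suc r) (b t)) has_field_derivative
              (\<Sum>e\<in>J. b' e * esym (J - {e}) r (b t0))) (at t0)" for r
    using insert by auto
  have rem: "insert c J - {e} = insert c (J - {e})" if "e \<in> J" for e
    using that insert by auto
  have eqf: "(\<lambda>t. esym (insert c J) (Suc r) (b t)) = (\<lambda>t. esym J (Suc r) (b t) + b t c * esym J r (b t))"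
    using insert by (simp add: esym_insert)
  show ?case
  proof (cases r)
    case 0
    then show ?thesis
      unfolding eqf using dJ[of 0] dc insert
      by (auto simp: esym_0 add.commute intro!: derivative_eq_intros)
  next
    case (Suc r')
    have "(\<Sum>e\<in>insert c J. b' e * esym (insert c J - {e}) r (b t0))
        = b' c * esym J r (b t0) + (\<Sum>e\<in>J. b' e * esym (insert c (J - {e})) r (b t0))"
      using insert by (simp add: rem)
    also have "\<dots> = (\<Sum>e\<in>J. b' e * esym (J - {e}) r (b t0))
        + (b' c * esym J r (b t0) + b t0 c * (\<Sum>e\<in>J. b' e * esym (J - {e}) r' (b t0)))"
      using insert Suc
      by (simp add: esym_insert algebra_simps sum.distrib sum_distrib_left)
    finally show ?thesis
      unfolding eqf using dJ[of r] dJ[of r'] dc Suc by (auto intro!: derivative_eq_intros)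
  qed
qed

section \<open>Vieta's formulas\<close>

lemma coeff_linear_factor_mult:
  fixes x :: complex
  shows "coeff ([:-x, 1:] * P) k = (if k = 0 then - x * coeff P 0 else coeff P (k - 1) - x * coeff P k)"
proof -
  have "[:-x, 1:] * P = pCons 0 P - Polynomial.smult x P"
    by (simp add: algebra_simps)
  then show ?thesis
    by (cases k) auto
qed

lemma coeff_prod_linear_factors:
  assumes "finite J"
  shows "coeff (\<Prod>c\<in>J. [:- a c, 1:]) k =
    (if k \<le> card J then (-1)^(card J - k) * esym J (card J - k) a else 0)"
  using assms
proof (induction J arbitrary: k rule: finite_induct)
  case empty
  then show ?case
    by (cases k) (auto simp: esym_0)
next
  case (insert c J)
  let ?P = "\<Prod>c\<in>J. [:- a c, 1:]" and ?m = "card J"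
  have "coeff (\<Prod>c\<in>insert c J. [:- a c, 1:]) k = coeff ([:-a c, 1:] * ?P) k"
    using insert by simp
  also have "\<dots> = (if k = 0 then - a c * coeff ?P 0 else coeff ?P (k - 1) - a c * coeff ?P k)"
    by (rule coeff_linear_factor_mult)
  also have "\<dots> = (if k \<le> Suc ?m then (-1)^(Suc ?m - k) * esym (insert c J) (Suc ?m - k) a else 0)"
  proof (cases k)
    case 0
    then show ?thesis
      using insert by (simp add: esym_insert esym_eq_0_if_card_less)
  next
    case (Suc k')
    consider "?m < k'" | "k' = ?m" | j where "?m - k' = Suc j" "?m - Suc k' = j"
      by (metis Suc_diff_Suc diff_Suc_1 linorder_cases)
    then show ?thesis
      by cases (use Suc insert in \<open>simp_all add: esym_0 esym_insert algebra_simps\<close>)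
  qed
  finally show ?case
    using insert by simp
qed

lemma degree_prod_linear_factors:
  fixes a :: "nat \<Rightarrow> complex"
  assumes "finite J"
  shows "degree (\<Prod>c\<in>J. [:- a c, 1:]) \<le> card J"
  by (rule degree_le) (simp add: coeff_prod_linear_factors assms)

lemma prod_diff_esym_expansion:
  assumes "finite J"
  shows "(\<Prod>c\<in>J. x - a c) = (\<Sum>k\<le>card J. (-1)^(card J - k) * esym J (card J - k) a * x ^ k)"
proof -
  let ?P = "\<Prod>c\<in>J. [:- a c, 1:]"
  have "(\<Prod>c\<in>J. x - a c) = poly ?P x"
    by (simp add: poly_prod)
  also have "\<dots> = poly (\<Sum>k\<le>card J. monom (coeff ?P k) k) x"
    by (simp only: poly_as_sum_of_monoms'[OF degree_prod_linear_factors[OF assms]])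
  also have "\<dots> = (\<Sum>k\<le>card J. (-1)^(card J - k) * esym J (card J - k) a * x ^ k)"
    by (simp add: poly_sum poly_monom coeff_prod_linear_factors assms)
  finally show ?thesis .
qed

section \<open>Square matrices indexed by \<open>{1..n}\<close>\<close>

text \<open>Matrices are functions \<open>nat \<Rightarrow> nat \<Rightarrow> complex\<close> of which only the entries with indices
  in \<open>{1..n}\<close> matter; \<open>meq n\<close> is equality of these entries.\<close>

definition mmult :: "nat \<Rightarrow> (nat \<Rightarrow> nat \<Rightarrow> complex) \<Rightarrow> (nat \<Rightarrow> nat \<Rightarrow> complex) \<Rightarrow> nat \<Rightarrow> nat \<Rightarrow> complex"
  where "mmult n X Y i j = (\<Sum>k\<in>{1..n}. X i k * Y k j)"

definition mtransp :: "(nat \<Rightarrow> nat \<Rightarrow> complex) \<Rightarrow> nat \<Rightarrow> nat \<Rightarrow> complex"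
  where "mtransp X i j = X j i"

definition mone :: "nat \<Rightarrow> nat \<Rightarrow> complex"
  where "mone i j = (if i = j then 1 else 0)"

definition meq :: "nat \<Rightarrow> (nat \<Rightarrow> nat \<Rightarrow> complex) \<Rightarrow> (nat \<Rightarrow> nat \<Rightarrow> complex) \<Rightarrow> bool"
  where "meq n X Y \<longleftrightarrow> (\<forall>i\<in>{1..n}. \<forall>j\<in>{1..n}. X i j = Y i j)"

lemma mmult_assoc: "mmult n (mmult n X Y) Z = mmult n X (mmult n Y Z)"
  unfolding mmult_def by (intro ext) (simp add: sum_distrib_left sum_distrib_right mult.assoc, rule sum.swap)

lemma mmult_mone_right:
  assumes "j \<in> {1..n}"
  shows "mmult n X mone i j = X i j"
proof -
  have "mmult n X mone i j = (\<Sum>k\<in>{1..n}. if k = j then X i k else 0)"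
    unfolding mmult_def mone_def by (intro sum.cong) auto
  then show ?thesis using assms by (simp add: sum.delta')
qed

lemma mmult_mone_left:
  assumes "i \<in> {1..n}"
  shows "mmult n mone X i j = X i j"
proof -
  have "mmult n mone X i j = (\<Sum>k\<in>{1..n}. if i = k then X k j else 0)"
    unfolding mmult_def mone_def by (intro sum.cong) auto
  then show ?thesis using assms by (simp add: sum.delta)
qed

lemma mtransp_mmult: "mmult n (mtransp X) (mtransp Y) = mtransp (mmult n Y X)"
  unfolding mmult_def mtransp_def by (intro ext) (simp add: mult.commute)

lemma meq_trans: "meq n X Y \<Longrightarrow> meq n Y Z \<Longrightarrow> meq n X Z" by (simp add: meq_def)
lemma meq_mtransp: "meq n X Y \<Longrightarrow> meq n (mtransp X) (mtransp Y)" by (simp add: meq_def mtransp_def)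

lemma mmult_cong_right: "meq n Y Y' \<Longrightarrow> j \<in> {1..n} \<Longrightarrow> mmult n X Y i j = mmult n X Y' i j"
  unfolding mmult_def meq_def by (intro sum.cong) auto
lemma mmult_cong_left: "meq n X X' \<Longrightarrow> i \<in> {1..n} \<Longrightarrow> mmult n X Y i j = mmult n X' Y i j"
  unfolding mmult_def meq_def by (intro sum.cong) auto
lemma meq_mmult_right: "meq n Y Y' \<Longrightarrow> meq n (mmult n X Y) (mmult n X Y')"
  by (simp add: meq_def mmult_cong_right)
lemma meq_mmult_left: "meq n X X' \<Longrightarrow> meq n (mmult n X Y) (mmult n X' Y)"
  by (simp add: meq_def mmult_cong_left)

lemma mmult_cancel:
  assumes "meq n (mmult n X Y) mone"
  shows "meq n (mmult n X (mmult n Y Z)) Z"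
proof -
  have "meq n (mmult n (mmult n X Y) Z) (mmult n mone Z)" by (rule meq_mmult_left[OF assms])
  then show ?thesis by (simp add: meq_def mmult_assoc mmult_mone_left)
qed

lemma mmult_right_inverse_imp_left:
  assumes "meq n (mmult n X Y) mone"
  shows "meq n (mmult n Y X) mone"
proof -
  define XM where "XM = mat n n (\<lambda>(i,j). X (Suc i) (Suc j))"
  define YM where "YM = mat n n (\<lambda>(i,j). Y (Suc i) (Suc j))"
  have XM: "XM \<in> carrier_mat n n" and YM: "YM \<in> carrier_mat n n" by (auto simp: XM_def YM_def)
  have ent: "(P * Q) $$ (i,j) = mmult n R S (Suc i) (Suc j)"
    if "P = mat n n (\<lambda>(i,j). R (Suc i) (Suc j))" "Q = mat n n (\<lambda>(i,j). S (Suc i) (Suc j))" "i < n" "j < n" for P Q R S i j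
  proof -
    have "(P * Q) $$ (i,j) = (\<Sum>k\<in>{0..<n}. R (Suc i) (Suc k) * S (Suc k) (Suc j))"
      using that by (simp add: scalar_prod_def)
    also have "\<dots> = mmult n R S (Suc i) (Suc j)"
      unfolding mmult_def using sum.atLeast1_atMost_eq[of "\<lambda>k. R (Suc i) k * S k (Suc j)" n, symmetric]
      by (simp add: atLeast0LessThan)
    finally show ?thesis .
  qed
  have "XM * YM = 1\<^sub>m n"
  proof (rule eq_matI)
    fix i j assume "i < dim_row (1\<^sub>m n :: complex mat)" "j < dim_col (1\<^sub>m n :: complex mat)"
    then have ij: "i < n" "j < n" by auto
    have "(XM * YM) $$ (i,j) = mmult n X Y (Suc i) (Suc j)" by (rule ent[OF XM_def YM_def ij])
    also have "\<dots> = mone (Suc i) (Suc j)" using assms ij by (auto simp: meq_def)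
    finally show "(XM * YM) $$ (i,j) = 1\<^sub>m n $$ (i,j)" using ij by (simp add: mone_def)
  qed (auto simp: XM_def YM_def)
  then have YX: "YM * XM = 1\<^sub>m n" using mat_mult_left_right_inverse[OF XM YM] by blast
  show ?thesis unfolding meq_def
  proof (intro ballI)
    fix i j assume i: "i \<in> {1..n}" and j: "j \<in> {1..n}"
    then obtain i' j' where ij: "i = Suc i'" "j = Suc j'" "i' < n" "j' < n"
      by (metis atLeastAtMost_iff Suc_le_eq not0_implies_Suc not_one_le_zero)
    have "mmult n Y X i j = (YM * XM) $$ (i',j')" using ent[OF YM_def XM_def ij(3,4)] ij by simp
    also have "\<dots> = mone i j" using YX ij by (simp add: mone_def)
    finally show "mmult n Y X i j = mone i j" .
  qed
qed

lemma meq_solve_left: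
  assumes "meq n (mmult n L G) mone" "meq n (mmult n G X) Y"
  shows "meq n X (mmult n L Y)"
proof -
  have "meq n (mmult n (mmult n L G) X) X"
    using meq_mmult_left[OF assms(1), of X] by (simp add: meq_def mmult_mone_left)
  moreover have "meq n (mmult n L (mmult n G X)) (mmult n L Y)"
    by (rule meq_mmult_right[OF assms(2)])
  ultimately show ?thesis
    by (simp add: meq_def mmult_assoc)
qed

lemma mmult_add_left: "mmult n (\<lambda>i j. X i j + Y i j) Z i j = mmult n X Z i j + mmult n Y Z i j"
  by (simp add: mmult_def distrib_right sum.distrib)

section \<open>The cometric in the coordinates \<open>a = p\<^sup>2\<close> and \<open>u = esym a\<close>\<close>

definition distinct_on :: "nat \<Rightarrow> (nat \<Rightarrow> complex) \<Rightarrow> bool"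
  where "distinct_on n a \<longleftrightarrow> (\<forall>i\<in>{1..n}. \<forall>j\<in>{1..n}. i \<noteq> j \<longrightarrow> a i \<noteq> a j)"

definition nonzero_on :: "nat \<Rightarrow> (nat \<Rightarrow> complex) \<Rightarrow> bool"
  where "nonzero_on n a \<longleftrightarrow> (\<forall>c\<in>{1..n}. a c \<noteq> 0)"

text \<open>The Jacobian \<open>\<partial>u\<^sub>k/\<partial>a\<^sub>c\<close> of \<open>u\<^sub>k = esym {1..n} k a\<close> and its inverse, which is given
  by Lagrange interpolation.\<close>

definition esym_jac :: "nat \<Rightarrow> (nat \<Rightarrow> complex) \<Rightarrow> nat \<Rightarrow> nat \<Rightarrow> complex"
  where "esym_jac n a c k = esym ({1..n} - {c}) (k - 1) a"

definition esym_jac_inv :: "nat \<Rightarrow> (nat \<Rightarrow> complex) \<Rightarrow> nat \<Rightarrow> nat \<Rightarrow> complex"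
  where "esym_jac_inv n a k c = (-1)^(k - 1) * a c ^ (n - k) / (\<Prod>e\<in>{1..n}-{c}. a c - a e)"

text \<open>In the coordinates \<open>a\<^sub>k = p\<^sub>k\<^sup>2\<close> the cometric becomes the constant matrix
  \<open>4 p\<^sub>k p\<^sub>l g\<^sup>k\<^sup>l(p) = 4 (1 - \<delta>\<^sub>k\<^sub>l)\<close>.\<close>

definition cometric_a :: "nat \<Rightarrow> nat \<Rightarrow> complex"
  where "cometric_a c d = (if c = d then 0 else 4)"

definition metric_a :: "nat \<Rightarrow> nat \<Rightarrow> nat \<Rightarrow> complex"
  where "metric_a n c d = (1 / (of_nat n - 1) - (if c = d then 1 else 0)) / 4"

definition cometric_u :: "nat \<Rightarrow> (nat \<Rightarrow> complex) \<Rightarrow> nat \<Rightarrow> nat \<Rightarrow> complex"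
  where "cometric_u n a = mmult n (mmult n (mtransp (esym_jac n a)) cometric_a) (esym_jac n a)"

definition metric_u :: "nat \<Rightarrow> (nat \<Rightarrow> complex) \<Rightarrow> nat \<Rightarrow> nat \<Rightarrow> complex"
  where "metric_u n a = mmult n (mmult n (esym_jac_inv n a) (metric_a n)) (mtransp (esym_jac_inv n a))"

lemma prod_diff_nonzero:
  assumes "distinct_on n a" "c \<in> {1..n}"
  shows "(\<Prod>e\<in>{1..n}-{c}. a c - a e) \<noteq> 0"
  using assms by (auto simp: distinct_on_def)

lemma esym_jac_right_inverse:
  assumes "distinct_on n a"
  shows "meq n (mmult n (esym_jac n a) (esym_jac_inv n a)) mone"
  unfolding meq_def
proof (intro ballI)
  fix c d assume c: "c \<in> {1..n}" and d: "d \<in> {1..n}"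
  let ?J = "{1..n} - {c}"
  have "(\<Prod>e\<in>?J. a d - a e) = (\<Sum>k\<le>n - 1. (-1)^(n - 1 - k) * esym ?J (n - 1 - k) a * a d ^ k)"
    using prod_diff_esym_expansion[of ?J "a d" a] c by simp
  also have "\<dots> = (\<Sum>k\<in>{1..n}. (-1)^(k - 1) * esym ?J (k - 1) a * a d ^ (n - k))"
    by (rule sum.reindex_bij_witness[where i = "\<lambda>k. n - k" and j = "\<lambda>k. n - k"])
      (use c in \<open>auto simp: diff_commute[of n 1]\<close>)
  finally have num: "(\<Sum>k\<in>{1..n}. (-1)^(k - 1) * esym ?J (k - 1) a * a d ^ (n - k)) = (\<Prod>e\<in>?J. a d - a e)" ..
  have "mmult n (esym_jac n a) (esym_jac_inv n a) c d = (\<Prod>e\<in>?J. a d - a e) / (\<Prod>e\<in>{1..n}-{d}. a d - a e)"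
    unfolding mmult_def esym_jac_def esym_jac_inv_def num[symmetric]
    by (simp add: sum_divide_distrib mult_ac)
  also have "\<dots> = mone c d"
  proof (cases "c = d")
    case True
    then show ?thesis
      using prod_diff_nonzero[OF assms d] by (simp add: mone_def)
  next
    case False
    then have "(\<Prod>e\<in>?J. a d - a e) = 0"
      using d by (intro prod_zero) auto
    then show ?thesis
      using False by (simp add: mone_def)
  qed
  finally show "mmult n (esym_jac n a) (esym_jac_inv n a) c d = mone c d" .
qed

lemma esym_jac_left_inverse:
  assumes "distinct_on n a"
  shows "meq n (mmult n (esym_jac_inv n a) (esym_jac n a)) mone"
  by (rule mmult_right_inverse_imp_left[OF esym_jac_right_inverse[OF assms]])

lemma cometric_a_right_inverse:
  assumes "n \<ge> 2"
  shows "meq n (mmult n cometric_a (metric_a n)) mone"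
  unfolding meq_def
proof (intro ballI)
  fix c d assume c: "c \<in> {1..n}" and d: "d \<in> {1..n}"
  have nz: "(of_nat n - 1 :: complex) \<noteq> 0"
    using assms by (simp add: of_nat_diff[symmetric])
  have "mmult n cometric_a (metric_a n) c d = (\<Sum>e\<in>{1..n}-{c}. cometric_a c e * metric_a n e d)"
    using c by (simp add: mmult_def sum.remove[of _ c] cometric_a_def)
  also have "\<dots> = (\<Sum>e\<in>{1..n}-{c}. 1 / (of_nat n - 1) - (if d = e then 1 else 0))"
    by (intro sum.cong) (auto simp: cometric_a_def metric_a_def)
  also have "\<dots> = of_nat (n - 1) / (of_nat n - 1) - (if d \<in> {1..n}-{c} then 1 else 0)"
    using c by (simp add: sum_subtractf sum.delta)
  also have "\<dots> = mone c d"
    using c d nz assms by (simp add: mone_def of_nat_diff)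
  finally show "mmult n cometric_a (metric_a n) c d = mone c d" .
qed

lemma cometric_u_right_inverse:
  assumes "n \<ge> 2" "distinct_on n a"
  shows "meq n (mmult n (cometric_u n a) (metric_u n a)) mone"
proof -
  let ?A = "esym_jac n a" and ?B = "esym_jac_inv n a"
  have "meq n (mmult n ?A (mmult n ?B (mmult n (metric_a n) (mtransp ?B)))) (mmult n (metric_a n) (mtransp ?B))"
    by (rule mmult_cancel[OF esym_jac_right_inverse[OF assms(2)]])
  then have "meq n (mmult n cometric_a (mmult n ?A (mmult n ?B (mmult n (metric_a n) (mtransp ?B)))))
      (mmult n cometric_a (mmult n (metric_a n) (mtransp ?B)))"
    by (rule meq_mmult_right)
  moreover have "meq n (mmult n cometric_a (mmult n (metric_a n) (mtransp ?B))) (mtransp ?B)"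
    by (rule mmult_cancel[OF cometric_a_right_inverse[OF assms(1)]])
  ultimately have "meq n (mmult n (cometric_u n a) (metric_u n a)) (mmult n (mtransp ?A) (mtransp ?B))"
    unfolding cometric_u_def metric_u_def mmult_assoc by (metis meq_mmult_right meq_trans)
  moreover have "meq n (mmult n (mtransp ?A) (mtransp ?B)) mone"
    using meq_mtransp[OF esym_jac_left_inverse[OF assms(2)]]
    by (simp add: mtransp_mmult) (simp add: meq_def mtransp_def mone_def)
  ultimately show ?thesis
    by (rule meq_trans)
qed

lemma cometric_u_left_inverse:
  assumes "n \<ge> 2" "distinct_on n a"
  shows "meq n (mmult n (metric_u n a) (cometric_u n a)) mone"
  by (rule mmult_right_inverse_imp_left[OF cometric_u_right_inverse[OF assms]])

lemma cometric_u_eq_sum: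
  "cometric_u n a i j = (\<Sum>k\<in>{1..n}. \<Sum>l\<in>{1..n}. cometric_a k l * esym_jac n a k i * esym_jac n a l j)"
  unfolding cometric_u_def mmult_def mtransp_def sum_distrib_right
  by (subst sum.swap) (simp add: mult_ac)

lemma cometric_u_symmetric: "cometric_u n a i j = cometric_u n a j i"
  unfolding cometric_u_eq_sum
  by (rule trans[OF sum.swap]) (intro sum.cong refl, auto simp: cometric_a_def mult_ac)

lemma cometric_u_permute:
  assumes bij: "bij_betw \<pi> {1..n} {1..n}" and ab: "\<And>d. d \<in> {1..n} \<Longrightarrow> a (\<pi> d) = b d"
  shows "cometric_u n a i j = cometric_u n b i j"
proof -
  have inj: "inj_on \<pi> {1..n}" and img: "\<pi> ` {1..n} = {1..n}"
    using bij by (auto simp: bij_betw_def)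
  have A: "esym_jac n a (\<pi> k) i = esym_jac n b k i" if k: "k \<in> {1..n}" for k i
  proof -
    have "{1..n} - {\<pi> k} = \<pi> ` ({1..n} - {k})"
      using inj_on_image_set_diff[OF inj, of "{1..n}" "{k}"] k img by simp
    moreover have "inj_on \<pi> ({1..n} - {k})"
      using inj by (rule inj_on_subset) blast
    ultimately have "esym_jac n a (\<pi> k) i = esym ({1..n} - {k}) (i - 1) (\<lambda>d. a (\<pi> d))"
      unfolding esym_jac_def by (simp add: esym_reindex)
    also have "\<dots> = esym_jac n b k i"
      unfolding esym_jac_def by (rule esym_cong) (simp add: ab)
    finally show ?thesis .
  qed
  have C: "cometric_a (\<pi> k) (\<pi> l) = cometric_a k l" if "k \<in> {1..n}" "l \<in> {1..n}" for k l
    using inj that by (simp add: cometric_a_def inj_on_eq_iff)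
  have "cometric_u n a i j = (\<Sum>k\<in>\<pi> ` {1..n}. \<Sum>l\<in>\<pi> ` {1..n}. cometric_a k l * esym_jac n a k i * esym_jac n a l j)"
    unfolding cometric_u_eq_sum img ..
  also have "\<dots> = (\<Sum>k\<in>{1..n}. \<Sum>l\<in>{1..n}. cometric_a (\<pi> k) (\<pi> l) * esym_jac n a (\<pi> k) i * esym_jac n a (\<pi> l) j)"
    by (simp only: sum.reindex[OF inj] o_def)
  also have "\<dots> = cometric_u n b i j"
    unfolding cometric_u_eq_sum by (intro sum.cong refl) (simp add: A C)
  finally show ?thesis .
qed

section \<open>The cometric and the metric on the orbit space\<close>

lemma pd_uC:
  assumes k: "k \<in> {1..n}" and i: "i \<in> {1..n}"
  shows "pd (uC n i) p k = 2 * p k * esym_jac n (\<lambda>j. p j ^ 2) k i"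
proof -
  obtain i' where i': "i = Suc i'"
    using i by (cases i) auto
  let ?J = "{1..n} - {k}" and ?a = "\<lambda>j. p j ^ 2"
  have "uC n i (p(k := t)) = esym ?J (Suc i') ?a + t^2 * esym ?J i' ?a" for t
  proof -
    have "uC n i (p(k := t)) = esym (insert k ?J) (Suc i') (\<lambda>j. (p(k := t)) j ^ 2)"
      unfolding uC_eq_esym i' using k by (simp add: insert_absorb)
    also have "\<dots> = esym ?J (Suc i') (\<lambda>j. (p(k := t)) j ^ 2) + t^2 * esym ?J i' (\<lambda>j. (p(k := t)) j ^ 2)"
      by (subst esym_insert) auto
    also have "\<dots> = esym ?J (Suc i') ?a + t^2 * esym ?J i' ?a"
      using esym_cong[of ?J "\<lambda>j. (p(k := t)) j ^ 2" ?a] by simp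
    finally show ?thesis .
  qed
  then have "pd (uC n i) p k = deriv (\<lambda>t. esym ?J (Suc i') ?a + t^2 * esym ?J i' ?a) (p k)"
    unfolding pd_def by simp
  also have "\<dots> = 2 * p k * esym ?J i' ?a"
    by (rule DERIV_imp_deriv) (auto intro!: derivative_eq_intros)
  finally show ?thesis
    using i' by (simp add: esym_jac_def)
qed

lemma cometric_pullback_eq:
  assumes "nonzero_on n p" "i \<in> {1..n}" "j \<in> {1..n}"
  shows "(\<Sum>k=1..n. \<Sum>l=1..n. gP k l p * pd (uC n i) p k * pd (uC n j) p l) = cometric_u n (\<lambda>j. p j ^ 2) i j"
  unfolding cometric_u_eq_sum
proof (intro sum.cong refl)
  fix k l assume k: "k \<in> {1..n}" and l: "l \<in> {1..n}"
  have "p k \<noteq> 0" "p l \<noteq> 0"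
    using assms k l by (auto simp: nonzero_on_def)
  then show "gP k l p * pd (uC n i) p k * pd (uC n j) p l
      = cometric_a k l * esym_jac n (\<lambda>j. p j ^ 2) k i * esym_jac n (\<lambda>j. p j ^ 2) l j"
    using k l assms by (simp add: pd_uC gP_def cometric_a_def field_simps)
qed

lemma esym_eq_imp_permutation:
  assumes "distinct_on n b" and eq: "\<And>m. m \<in> {1..n} \<Longrightarrow> esym {1..n} m a = esym {1..n} m b"
  obtains \<pi> where "bij_betw \<pi> {1..n} {1..n}" "\<And>d. d \<in> {1..n} \<Longrightarrow> a (\<pi> d) = b d"
proof -
  have "esym {1..n} m a = esym {1..n} m b" if "m \<le> n" for m
    using eq[of m] that by (cases "m = 0") (auto simp: esym_0)
  then have roots: "(\<Prod>c\<in>{1..n}. x - a c) = (\<Prod>c\<in>{1..n}. x - b c)" for x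
    by (simp add: prod_diff_esym_expansion)
  have "\<exists>c\<in>{1..n}. a c = b d" if d: "d \<in> {1..n}" for d
  proof -
    have "(\<Prod>c\<in>{1..n}. b d - a c) = 0"
      unfolding roots using d by (intro prod_zero) auto
    then show ?thesis
      by auto
  qed
  then obtain \<pi> where \<pi>: "\<And>d. d \<in> {1..n} \<Longrightarrow> \<pi> d \<in> {1..n} \<and> a (\<pi> d) = b d"
    by metis
  have inj: "inj_on \<pi> {1..n}"
    using \<pi> assms(1) by (intro inj_onI) (metis distinct_on_def)
  moreover have "\<pi> ` {1..n} = {1..n}"
    by (rule endo_inj_surj) (use \<pi> inj in auto)
  ultimately have "bij_betw \<pi> {1..n} {1..n}"
    by (simp add: bij_betw_def)
  then show ?thesis
    using that \<pi> by blast
qed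

lemma gU_eq_cometric_u:
  assumes b: "distinct_on n b" "nonzero_on n b" and v: "\<And>m. m \<in> {1..n} \<Longrightarrow> v m = esym {1..n} m b"
    and ij: "i \<in> {1..n}" "j \<in> {1..n}"
  shows "gU n i j v = cometric_u n b i j"
  unfolding gU_def
proof (rule some_equality)
  define p0 where "p0 = (\<lambda>j. csqrt (b j))"
  have "nonzero_on n p0"
    using b by (auto simp: nonzero_on_def p0_def)
  moreover have "uC n m p0 = v m" if "m \<in> {1..n}" for m
    unfolding uC_eq_esym v[OF that] p0_def by (rule esym_cong) simp
  moreover have "cometric_u n (\<lambda>j. p0 j ^ 2) i j = cometric_u n b i j"
    unfolding cometric_u_eq_sum esym_jac_def p0_def by simp
  ultimately show "\<exists>p. (\<forall>k\<in>{1..n}. p k \<noteq> 0) \<and> (\<forall>m\<in>{1..n}. uC n m p = v m) \<and>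
      cometric_u n b i j = (\<Sum>k = 1..n. \<Sum>l = 1..n. gP k l p * pd (uC n i) p k * pd (uC n j) p l)"
    using cometric_pullback_eq[of n p0 i j] ij by (auto simp: nonzero_on_def)
next
  fix w assume "\<exists>p. (\<forall>k\<in>{1..n}. p k \<noteq> 0) \<and> (\<forall>m\<in>{1..n}. uC n m p = v m) \<and>
      w = (\<Sum>k = 1..n. \<Sum>l = 1..n. gP k l p * pd (uC n i) p k * pd (uC n j) p l)"
  then obtain p where p: "nonzero_on n p" "\<And>m. m \<in> {1..n} \<Longrightarrow> uC n m p = v m"
    and w: "w = (\<Sum>k = 1..n. \<Sum>l = 1..n. gP k l p * pd (uC n i) p k * pd (uC n j) p l)"
    by (auto simp: nonzero_on_def)
  have "esym {1..n} m (\<lambda>j. p j ^ 2) = esym {1..n} m b" if "m \<in> {1..n}" for m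
    using p(2)[OF that] v[OF that] by (simp add: uC_eq_esym)
  then obtain \<pi> where "bij_betw \<pi> {1..n} {1..n}" "\<And>d. d \<in> {1..n} \<Longrightarrow> p (\<pi> d) ^ 2 = b d"
    using esym_eq_imp_permutation[OF b(1)] by blast
  then show "w = cometric_u n b i j"
    using w cometric_pullback_eq[OF p(1) ij] cometric_u_permute[of \<pi> n "\<lambda>j. p j ^ 2" b] by simp
qed

lemma gL_eq_metric_u:
  assumes n: "n \<ge> 2" and b: "distinct_on n b" "nonzero_on n b"
    and v: "\<And>m. m \<in> {1..n} \<Longrightarrow> v m = esym {1..n} m b"
    and lk: "l \<in> {1..n}" "k \<in> {1..n}"
  shows "gL n v l k = metric_u n b l k"
proof -
  have gU: "gU n i j v = cometric_u n b i j" if "i \<in> {1..n}" "j \<in> {1..n}" for i j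
    by (rule gU_eq_cometric_u[OF b v that])
  let ?P = "\<lambda>G. \<forall>i\<in>{1..n}. \<forall>k\<in>{1..n}. (\<Sum>j=1..n. gU n i j v * G j k) = (if i = k then 1 else 0)"
  have "?P (metric_u n b)"
    using cometric_u_right_inverse[OF n b(1)] by (simp add: meq_def mmult_def gU mone_def)
  then have "?P (gL n v)"
    unfolding gL_def by (rule someI[of ?P])
  then have "meq n (mmult n (cometric_u n b) (gL n v)) mone"
    by (simp add: meq_def mmult_def gU mone_def)
  then have "meq n (gL n v) (mmult n (metric_u n b) mone)"
    by (rule meq_solve_left[OF cometric_u_left_inverse[OF n b(1)]])
  then show ?thesis
    using lk by (simp add: meq_def mmult_mone_right)
qed

section \<open>Lifting a coordinate line of the orbit space\<close>

lemma finite_pos_lower_bound: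
  fixes f :: "'a \<Rightarrow> real"
  assumes "finite A" "\<And>x. x \<in> A \<Longrightarrow> f x > 0"
  obtains R where "R > 0" "\<And>x. x \<in> A \<Longrightarrow> R \<le> f x"
proof
  show "Min (insert 1 (f ` A)) > 0"
    using assms by simp
  show "Min (insert 1 (f ` A)) \<le> f x" if "x \<in> A" for x
    using assms that by (intro Min_le) auto
qed

lemma separating_balls:
  fixes a :: "nat \<Rightarrow> complex"
  assumes "distinct_on n a" "nonzero_on n a"
  obtains R where "R > 0" "\<And>c x. c \<in> {1..n} \<Longrightarrow> x \<in> ball (a c) R \<Longrightarrow> x \<noteq> 0"
    "\<And>c e x y. c \<in> {1..n} \<Longrightarrow> e \<in> {1..n} \<Longrightarrow> c \<noteq> e \<Longrightarrow>
      x \<in> ball (a c) R \<Longrightarrow> y \<in> ball (a e) R \<Longrightarrow> x \<noteq> y"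
proof -
  obtain R where R: "R > 0" and R_le: "\<And>ce. ce \<in> {1..n} \<times> {1..n} \<Longrightarrow>
      R \<le> (if fst ce = snd ce then cmod (a (fst ce)) else cmod (a (fst ce) - a (snd ce))) / 2"
    by (rule finite_pos_lower_bound[of "{1..n} \<times> {1..n}"
          "\<lambda>ce. (if fst ce = snd ce then cmod (a (fst ce)) else cmod (a (fst ce) - a (snd ce))) / 2"])
      (use assms in \<open>auto simp: distinct_on_def nonzero_on_def\<close>)
  have ball_nz: "x \<noteq> 0" if "c \<in> {1..n}" "x \<in> ball (a c) R" for c x
    using that R R_le[of "(c, c)"] by (auto simp: dist_norm)
  have ball_disj: "x \<noteq> y" if "c \<in> {1..n}" "e \<in> {1..n}" "c \<noteq> e" "x \<in> ball (a c) R" "y \<in> ball (a e) R" for c e x y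
  proof
    assume "x = y"
    then have "cmod (a c - x) < R" "cmod (x - a e) < R"
      using that by (auto simp: dist_norm norm_minus_commute)
    then have "cmod (a c - a e) < R + R"
      by (rule norm_diff_triangle_less)
    then show False
      using that R_le[of "(c, e)"] by simp
  qed
  from R ball_nz ball_disj show thesis
    by (rule that)
qed

lemma holomorphic_local_inverse:
  assumes "f holomorphic_on S" "open S" "z \<in> S" "deriv f z \<noteq> 0"
  obtains r g where "r > 0" "ball z r \<subseteq> S" "open (f ` ball z r)" "g holomorphic_on f ` ball z r"
    "\<And>w. w \<in> ball z r \<Longrightarrow> g (f w) = w"
proof -
  obtain r where r: "r > 0" "ball z r \<subseteq> S" "open (f ` ball z r)" "inj_on f (ball z r)"
    using has_complex_derivative_locally_invertible[OF assms(1,3,2,4)] by blast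
  moreover obtain g where "g holomorphic_on f ` ball z r" "\<And>w. w \<in> ball z r \<Longrightarrow> g (f w) = w"
    using holomorphic_has_inverse[OF holomorphic_on_subset[OF assms(1) r(2)] open_ball r(4)] by metis
  ultimately show thesis
    using that by blast
qed

lemma has_field_derivative_prod_diff_at_root:
  fixes a :: "nat \<Rightarrow> complex"
  assumes "finite J" "c \<in> J"
  shows "((\<lambda>x. \<Prod>e\<in>J. x - a e) has_field_derivative (\<Prod>e\<in>J-{c}. a c - a e)) (at (a c))"
proof -
  have "(\<lambda>x. \<Prod>e\<in>J. x - a e) = (\<lambda>x. (x - a c) * (\<Prod>e\<in>J-{c}. x - a e))"
    using assms by (simp add: prod.remove)
  moreover have "((\<lambda>x. (x - a c) * (\<Prod>e\<in>J-{c}. x - a e)) has_field_derivative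
      1 * (\<Prod>e\<in>J-{c}. a c - a e) + (a c - a c) * (\<Sum>e\<in>J-{c}. \<Prod>y\<in>J-{c}-{e}. a c - a y)) (at (a c))"
    using assms by (auto intro!: derivative_eq_intros has_field_derivative_prod)
  ultimately show ?thesis
    by simp
qed

lemma esym_perturbed_roots:
  fixes a b :: "nat \<Rightarrow> complex"
  assumes b: "distinct_on n b" and s: "s \<in> {1..n}"
    and root: "\<And>c. c \<in> {1..n} \<Longrightarrow> (\<Prod>e\<in>{1..n}. b c - a e) + (-1)^s * (t - us) * b c ^ (n - s) = 0"
    and m: "m \<in> {1..n}"
  shows "esym {1..n} m b = esym {1..n} m a + (if m = s then t - us else 0)"
proof -
  define P1 where "P1 = (\<Prod>c\<in>{1..n}. [:- b c, 1:])"
  define P2 where "P2 = (\<Prod>c\<in>{1..n}. [:- a c, 1:]) + monom ((-1)^s * (t - us)) (n - s)"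
  have "degree P1 \<le> n" "degree P2 \<le> n"
    unfolding P1_def P2_def
    using degree_prod_linear_factors[of "{1..n}" a] degree_prod_linear_factors[of "{1..n}" b]
      degree_monom_le[of "(-1)^s * (t - us)" "n - s"]
    by (auto intro!: degree_add_le)
  moreover have "n - s \<noteq> n"
    using s by auto
  then have "coeff (P1 - P2) n = 0"
    by (simp add: P1_def P2_def coeff_prod_linear_factors esym_0)
  ultimately have deg: "degree (P1 - P2) < n"
    using s by (intro degree_lessI) (auto simp: coeff_eq_0 le_less intro: order.trans[OF degree_diff_le_max])
  have inj: "inj_on b {1..n}"
    using b by (auto simp: distinct_on_def inj_on_def)
  have "P1 - P2 = 0"
  proof (rule poly_eqI_degree[where A = "b ` {1..n}"])
    fix x assume "x \<in> b ` {1..n}"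
    then obtain c where c: "c \<in> {1..n}" "x = b c"
      by auto
    have "poly P1 x = 0"
      unfolding P1_def poly_prod using c by (intro prod_zero) auto
    moreover have "poly P2 x = 0"
      unfolding P2_def using root[OF c(1)] c by (simp add: poly_prod poly_monom mult.assoc)
    ultimately show "poly (P1 - P2) x = poly 0 x"
      by simp
  qed (use deg card_image[OF inj] in auto)
  then have "coeff P1 (n - m) = coeff P2 (n - m)"
    by simp
  moreover have "(n - s = n - m) = (m = s)"
    using m s by auto
  ultimately have "(-1)^m * esym {1..n} m b = (-1)^m * (esym {1..n} m a + (if m = s then t - us else 0))"
    using m by (simp add: P1_def P2_def coeff_prod_linear_factors algebra_simps)
  then show ?thesis
    by simp
qed

lemma has_field_derivative_root_map:
  fixes a :: "nat \<Rightarrow> complex"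
  assumes c: "c \<in> {1..n}" and acnz: "a c \<noteq> 0"
  shows "((\<lambda>x. us - (-1)^s * ((\<Prod>e\<in>{1..n}. x - a e) / x ^ k)) has_field_derivative
           0 - (-1)^s * ((\<Prod>e\<in>{1..n}-{c}. a c - a e) / a c ^ k)) (at (a c))"
proof -
  let ?Q = "\<Prod>e\<in>{1..n}-{c}. a c - a e"
  have root: "(\<Prod>e\<in>{1..n}. a c - a e) = 0"
    using c by (intro prod_zero) auto
  have "((\<lambda>x. (\<Prod>e\<in>{1..n}. x - a e) / x ^ k) has_field_derivative
      (?Q * a c ^ k - (\<Prod>e\<in>{1..n}. a c - a e) * (of_nat k * (1 * a c ^ (k - Suc 0)))) / (a c ^ k * a c ^ k))
      (at (a c))"
    using c acnz by (intro DERIV_divide has_field_derivative_prod_diff_at_root DERIV_power DERIV_ident) auto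
  then have "((\<lambda>x. (\<Prod>e\<in>{1..n}. x - a e) / x ^ k) has_field_derivative ?Q / a c ^ k) (at (a c))"
    using acnz by (simp only: root) (simp add: field_simps)
  then show ?thesis
    by (intro DERIV_diff DERIV_const DERIV_cmult)
qed

lemma root_map_eq_imp_root:
  fixes x :: complex
  assumes "x \<noteq> 0" "us - (-1)^s * (P / x ^ k) = t"
  shows "P + (-1)^s * (t - us) * x ^ k = 0"
proof -
  have "(-1)^s * ((-1)^s * (P / x ^ k)) = (-1)^s * (us - t)"
    using assms(2) by (simp add: algebra_simps)
  then have "P / x ^ k = (-1)^s * (us - t)"
    by (simp flip: mult.assoc power_mult_distrib)
  then show ?thesis
    using assms(1) by (simp add: field_simps)
qed

text \<open>The coordinates of \<open>\<psi> t\<close> are the roots of \<open>\<Prod>(x - a\<^sub>e) + (-1)\<^sup>s (t - u\<^sub>s) x\<^sup>n\<^sup>-\<^sup>s\<close>,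
  i.e. the solutions of \<open>\<phi> x = t\<close>; as \<open>\<phi>'(a\<^sub>c) \<noteq> 0\<close>, they are given near each \<open>a\<^sub>c\<close>
  by a local inverse of \<open>\<phi>\<close>.\<close>

lemma coordinate_line_lift:
  fixes a :: "nat \<Rightarrow> complex"
  assumes a: "distinct_on n a" "nonzero_on n a" and s: "s \<in> {1..n}"
  obtains N \<psi> \<psi>' where "open N" "esym {1..n} s a \<in> N"
    "\<And>t. t \<in> N \<Longrightarrow> distinct_on n (\<psi> t) \<and> nonzero_on n (\<psi> t)"
    "\<And>t m. t \<in> N \<Longrightarrow> m \<in> {1..n} \<Longrightarrow> esym {1..n} m (\<psi> t) = (if m = s then t else esym {1..n} m a)"
    "\<psi> (esym {1..n} s a) = a"
    "\<And>c. c \<in> {1..n} \<Longrightarrow> ((\<lambda>t. \<psi> t c) has_field_derivative \<psi>' c) (at (esym {1..n} s a))"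
proof -
  define us where "us = esym {1..n} s a"
  define \<phi> where "\<phi> = (\<lambda>x. us - (-1)^s * ((\<Prod>e\<in>{1..n}. x - a e) / x^(n - s)))"
  obtain R where R: "R > 0" and ball_nz: "\<And>c x. c \<in> {1..n} \<Longrightarrow> x \<in> ball (a c) R \<Longrightarrow> x \<noteq> 0"
    and ball_disj: "\<And>c e x y. c \<in> {1..n} \<Longrightarrow> e \<in> {1..n} \<Longrightarrow> c \<noteq> e \<Longrightarrow>
      x \<in> ball (a c) R \<Longrightarrow> y \<in> ball (a e) R \<Longrightarrow> x \<noteq> y"
    using separating_balls[OF a] by metis
  have phi_ac: "\<phi> (a c) = us" if "c \<in> {1..n}" for c
    using that by (auto simp: \<phi>_def intro: prod_zero)
  define good where "good c r g \<longleftrightarrow> r > 0 \<and> ball (a c) r \<subseteq> ball (a c) R \<and> open (\<phi> ` ball (a c) r)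
      \<and> g holomorphic_on \<phi> ` ball (a c) r \<and> (\<forall>z\<in>ball (a c) r. g (\<phi> z) = z)"
    for c r and g :: "complex \<Rightarrow> complex"
  have "\<exists>rg. good c (fst rg) (snd rg)" if c: "c \<in> {1..n}" for c
  proof -
    have acnz: "a c \<noteq> 0"
      using ball_nz[OF c, of "a c"] R by simp
    have "(\<phi> has_field_derivative 0 - (-1)^s * ((\<Prod>e\<in>{1..n}-{c}. a c - a e) / a c ^ (n - s))) (at (a c))"
      unfolding \<phi>_def by (rule has_field_derivative_root_map[where a = a, OF c acnz])
    then have "deriv \<phi> (a c) = 0 - (-1)^s * ((\<Prod>e\<in>{1..n}-{c}. a c - a e) / a c ^ (n - s))"
      by (rule DERIV_imp_deriv)
    then have "deriv \<phi> (a c) \<noteq> 0"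
      using prod_diff_nonzero[OF a(1) c] acnz by simp
    moreover have "\<phi> holomorphic_on ball (a c) R"
      unfolding \<phi>_def using ball_nz[OF c] by (intro holomorphic_intros) auto
    ultimately obtain r g where "r > 0" "ball (a c) r \<subseteq> ball (a c) R" "open (\<phi> ` ball (a c) r)"
        "g holomorphic_on \<phi> ` ball (a c) r" "\<And>w. w \<in> ball (a c) r \<Longrightarrow> g (\<phi> w) = w"
      using holomorphic_local_inverse[of \<phi> "ball (a c) R" "a c"] R by auto
    then show ?thesis
      by (intro exI[of _ "(r, g)"]) (simp add: good_def)
  qed
  then obtain F where F: "\<forall>c\<in>{1..n}. good c (fst (F c)) (snd (F c))"
    using bchoice[of "{1..n}" "\<lambda>c rg. good c (fst rg) (snd rg)"] by blast
  define r where "r c = fst (F c)" for c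
  define g where "g c = snd (F c)" for c
  have "good c (r c) (g c)" if "c \<in> {1..n}" for c
    using F that by (simp add: r_def g_def)
  then have r: "\<And>c. c \<in> {1..n} \<Longrightarrow> r c > 0 \<and> ball (a c) (r c) \<subseteq> ball (a c) R"
    and g: "\<And>c. c \<in> {1..n} \<Longrightarrow> open (\<phi> ` ball (a c) (r c)) \<and> g c holomorphic_on \<phi> ` ball (a c) (r c)"
    and g_inv: "\<And>c z. c \<in> {1..n} \<Longrightarrow> z \<in> ball (a c) (r c) \<Longrightarrow> g c (\<phi> z) = z"
    unfolding good_def by blast+
  define N where "N = (\<Inter>c\<in>{1..n}. \<phi> ` ball (a c) (r c))"
  define \<psi> where "\<psi> = (\<lambda>t c. if c \<in> {1..n} then g c t else a c)"
  have ac_in: "a c \<in> ball (a c) (r c)" if "c \<in> {1..n}" for c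
    using r[OF that] by simp
  have us_in: "us \<in> \<phi> ` ball (a c) (r c)" if "c \<in> {1..n}" for c
    using ac_in[OF that] phi_ac[OF that] by (metis image_eqI)
  have inball: "\<psi> t c \<in> ball (a c) R \<and> \<phi> (\<psi> t c) = t" if t: "t \<in> N" and c: "c \<in> {1..n}" for t c
  proof -
    obtain z where "z \<in> ball (a c) (r c)" "t = \<phi> z"
      using t c unfolding N_def by blast
    then show ?thesis
      using r[OF c] g_inv[OF c] c by (auto simp: \<psi>_def)
  qed
  have dist: "distinct_on n (\<psi> t)" if "t \<in> N" for t
    unfolding distinct_on_def
    using ball_disj inball[OF that] by (metis (no_types, lifting))
  show ?thesis
  proof (rule that[of N \<psi> "\<lambda>c. deriv (g c) us"])
    show "open N"
      unfolding N_def using g by (intro open_INT) auto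
    show "esym {1..n} s a \<in> N"
      using us_in by (simp add: N_def us_def)
    show "distinct_on n (\<psi> t) \<and> nonzero_on n (\<psi> t)" if "t \<in> N" for t
      using dist[OF that] ball_nz inball[OF that] by (auto simp: nonzero_on_def)
  next
    fix t m assume t: "t \<in> N" and m: "m \<in> {1..n}"
    have "(\<Prod>e\<in>{1..n}. \<psi> t c - a e) + (-1)^s * (t - us) * \<psi> t c ^ (n - s) = 0" if c: "c \<in> {1..n}" for c
      using inball[OF t c] ball_nz[OF c] by (intro root_map_eq_imp_root) (auto simp: \<phi>_def)
    from esym_perturbed_roots[OF dist[OF t] s this m]
    show "esym {1..n} m (\<psi> t) = (if m = s then t else esym {1..n} m a)"
      by (simp add: us_def)
  next
    show "\<psi> (esym {1..n} s a) = a"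
      using g_inv[OF _ ac_in] phi_ac by (auto simp: \<psi>_def us_def)
  next
    fix c assume c: "c \<in> {1..n}"
    have "\<forall>\<^sub>F t in nhds us. \<psi> t c = g c t"
      using c by (simp add: \<psi>_def)
    moreover have "(g c has_field_derivative deriv (g c) us) (at us)"
      using g[OF c] us_in[OF c] by (auto intro!: holomorphic_derivI)
    ultimately show "((\<lambda>t. \<psi> t c) has_field_derivative deriv (g c) us) (at (esym {1..n} s a))"
      unfolding us_def by (subst DERIV_cong_ev[OF refl _ refl]) auto
  qed
qed

section \<open>Derivatives of the metric on the orbit space\<close>

text \<open>\<open>esym_jac_deriv n a c\<close> is \<open>\<partial>(esym_jac n a)/\<partial>a\<^sub>c\<close>, \<open>cometric_u_partial n a c\<close> is
  \<open>\<partial>(cometric_u n a)/\<partial>a\<^sub>c\<close>, and \<open>cometric_u_dir n a x\<close> is the derivative of \<open>cometric_u\<close>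
  along the coordinate \<open>u\<^sub>x\<close>.\<close>

definition esym_jac_deriv :: "nat \<Rightarrow> (nat \<Rightarrow> complex) \<Rightarrow> nat \<Rightarrow> nat \<Rightarrow> nat \<Rightarrow> complex"
  where "esym_jac_deriv n a c d i =
    (if c \<in> {1..n} - {d} \<and> 2 \<le> i then esym ({1..n} - {d} - {c}) (i - 2) a else 0)"

definition cometric_u_partial :: "nat \<Rightarrow> (nat \<Rightarrow> complex) \<Rightarrow> nat \<Rightarrow> nat \<Rightarrow> nat \<Rightarrow> complex"
  where "cometric_u_partial n a c i j = (\<Sum>k\<in>{1..n}. \<Sum>l\<in>{1..n}. cometric_a k l *
    (esym_jac_deriv n a c k i * esym_jac n a l j + esym_jac n a k i * esym_jac_deriv n a c l j))"

definition cometric_u_dir :: "nat \<Rightarrow> (nat \<Rightarrow> complex) \<Rightarrow> nat \<Rightarrow> nat \<Rightarrow> nat \<Rightarrow> complex"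
  where "cometric_u_dir n a x i j = (\<Sum>c\<in>{1..n}. esym_jac_inv n a x c * cometric_u_partial n a c i j)"

lemma esym_jac_deriv_symmetric:
  "c \<in> {1..n} \<Longrightarrow> d \<in> {1..n} \<Longrightarrow> esym_jac_deriv n a c d i = esym_jac_deriv n a d c i"
  unfolding esym_jac_deriv_def by (auto simp: Diff_insert2[symmetric] insert_commute)

lemma has_field_derivative_esym_jac:
  assumes d\<psi>: "\<And>c. c \<in> {1..n} \<Longrightarrow> ((\<lambda>t. \<psi> t c) has_field_derivative \<psi>' c) (at t0)"
    and d: "d \<in> {1..n}"
  shows "((\<lambda>t. esym_jac n (\<psi> t) d i) has_field_derivative
           (\<Sum>c\<in>{1..n}. \<psi>' c * esym_jac_deriv n (\<psi> t0) c d i)) (at t0)"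
proof (cases "2 \<le> i")
  case False
  then show ?thesis
    by (simp add: esym_jac_def esym_jac_deriv_def esym_0)
next
  case True
  let ?J = "{1..n} - {d}"
  have "((\<lambda>t. esym ?J (Suc (i - 2)) (\<psi> t)) has_field_derivative
      (\<Sum>c\<in>?J. \<psi>' c * esym (?J - {c}) (i - 2) (\<psi> t0))) (at t0)"
    by (rule has_field_derivative_esym) (auto intro: d\<psi>)
  moreover have "(\<Sum>c\<in>{1..n}. \<psi>' c * esym_jac_deriv n (\<psi> t0) c d i)
      = (\<Sum>c\<in>?J. \<psi>' c * esym (?J - {c}) (i - 2) (\<psi> t0))"
    using True by (intro sum.mono_neutral_cong_right) (auto simp: esym_jac_deriv_def)
  moreover have "i - 1 = Suc (i - 2)"
    using True by simp
  ultimately show ?thesis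
    unfolding esym_jac_def by simp
qed

lemma has_field_derivative_cometric_u:
  assumes d\<psi>: "\<And>c. c \<in> {1..n} \<Longrightarrow> ((\<lambda>t. \<psi> t c) has_field_derivative \<psi>' c) (at t0)"
  shows "((\<lambda>t. cometric_u n (\<psi> t) i j) has_field_derivative
           (\<Sum>c\<in>{1..n}. \<psi>' c * cometric_u_partial n (\<psi> t0) c i j)) (at t0)"
proof -
  let ?A = "esym_jac n (\<psi> t0)" and ?T = "\<lambda>c. esym_jac_deriv n (\<psi> t0) c"
  have "((\<lambda>t. cometric_u n (\<psi> t) i j) has_field_derivative
      (\<Sum>k\<in>{1..n}. \<Sum>l\<in>{1..n}. cometric_a k l *
        ((\<Sum>c\<in>{1..n}. \<psi>' c * ?T c k i) * ?A l j + ?A k i * (\<Sum>c\<in>{1..n}. \<psi>' c * ?T c l j)))) (at t0)"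
    unfolding cometric_u_eq_sum
    by (intro DERIV_sum) (auto intro!: derivative_eq_intros has_field_derivative_esym_jac d\<psi> simp: algebra_simps)
  also have "(\<Sum>k\<in>{1..n}. \<Sum>l\<in>{1..n}. cometric_a k l *
        ((\<Sum>c\<in>{1..n}. \<psi>' c * ?T c k i) * ?A l j + ?A k i * (\<Sum>c\<in>{1..n}. \<psi>' c * ?T c l j)))
      = (\<Sum>k\<in>{1..n}. \<Sum>l\<in>{1..n}. \<Sum>c\<in>{1..n}. \<psi>' c *
          (cometric_a k l * (?T c k i * ?A l j + ?A k i * ?T c l j)))"
    by (simp add: sum_distrib_left sum_distrib_right sum.distrib algebra_simps)
  also have "\<dots> = (\<Sum>c\<in>{1..n}. \<psi>' c * cometric_u_partial n (\<psi> t0) c i j)"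
    unfolding cometric_u_partial_def sum_distrib_left
    by (subst sum.swap, rule sum.cong[OF refl], rule sum.swap)
  finally show ?thesis .
qed

lemma lift_velocity:
  assumes a: "distinct_on n a" and s: "s \<in> {1..n}" and N: "open N" "t0 \<in> N"
    and \<psi>e: "\<And>t m. t \<in> N \<Longrightarrow> m \<in> {1..n} \<Longrightarrow> esym {1..n} m (\<psi> t) = (if m = s then t else esym {1..n} m a)"
    and \<psi>0: "\<psi> t0 = a"
    and d\<psi>: "\<And>c. c \<in> {1..n} \<Longrightarrow> ((\<lambda>t. \<psi> t c) has_field_derivative \<psi>' c) (at t0)"
    and d: "d \<in> {1..n}"
  shows "\<psi>' d = esym_jac_inv n a s d"
proof -
  have row: "(\<Sum>c\<in>{1..n}. \<psi>' c * esym_jac n a c m) = mone s m" if m: "m \<in> {1..n}" for m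
  proof -
    obtain m' where m': "m = Suc m'"
      using m by (cases m) auto
    have "\<forall>\<^sub>F t in nhds t0. esym {1..n} (Suc m') (\<psi> t) = (if m = s then t else esym {1..n} m a)"
      using eventually_nhds_in_open[OF N] by (rule eventually_mono) (use \<psi>e m m' in auto)
    moreover have "((\<lambda>t. esym {1..n} (Suc m') (\<psi> t)) has_field_derivative
        (\<Sum>c\<in>{1..n}. \<psi>' c * esym_jac n a c m)) (at t0)"
      using has_field_derivative_esym[of "{1..n}" \<psi> \<psi>' t0 m'] d\<psi> \<psi>0 m' by (simp add: esym_jac_def)
    ultimately have "((\<lambda>t. if m = s then t else esym {1..n} m a) has_field_derivative
        (\<Sum>c\<in>{1..n}. \<psi>' c * esym_jac n a c m)) (at t0)"
      by (simp add: DERIV_cong_ev)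
    moreover have "((\<lambda>t. if m = s then t else esym {1..n} m a) has_field_derivative mone s m) (at t0)"
      by (cases "m = s") (auto simp: mone_def)
    ultimately show ?thesis
      by (rule DERIV_unique)
  qed
  have "esym_jac_inv n a s d = (\<Sum>m\<in>{1..n}. mone s m * esym_jac_inv n a m d)"
    using mmult_mone_left[OF s, of "esym_jac_inv n a" d] by (simp add: mmult_def)
  also have "\<dots> = (\<Sum>m\<in>{1..n}. (\<Sum>c\<in>{1..n}. \<psi>' c * esym_jac n a c m) * esym_jac_inv n a m d)"
    by (intro sum.cong refl) (simp only: row)
  also have "\<dots> = (\<Sum>c\<in>{1..n}. \<psi>' c * mmult n (esym_jac n a) (esym_jac_inv n a) c d)"
    unfolding mmult_def sum_distrib_right sum_distrib_left
    by (subst sum.swap) (simp add: mult.assoc)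
  also have "\<dots> = (\<Sum>c\<in>{1..n}. \<psi>' c * mone c d)"
    using esym_jac_right_inverse[OF a] d by (intro sum.cong refl) (simp add: meq_def)
  also have "\<dots> = \<psi>' d"
    using d by (simp add: mone_def sum.delta' if_distrib[of "\<lambda>x. _ * x"] cong: if_cong)
  finally show ?thesis ..
qed

lemma has_field_derivative_mat_inverse:
  assumes ev: "\<forall>\<^sub>F t in nhds t0. meq n (mmult n (G t) (L t)) mone"
    and dG: "\<And>i j. ((\<lambda>t. G t i j) has_field_derivative G' i j) (at t0)"
    and dL: "\<And>i j. ((\<lambda>t. L t i j) has_field_derivative L' i j) (at t0)"
    and LG: "meq n (mmult n (L t0) (G t0)) mone"
    and lk: "l \<in> {1..n}" "k \<in> {1..n}"
  shows "L' l k = - mmult n (L t0) (mmult n G' (L t0)) l k"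
proof -
  have "mmult n G' (L t0) i j + mmult n (G t0) L' i j = 0" if ij: "i \<in> {1..n}" "j \<in> {1..n}" for i j
  proof -
    have "((\<lambda>t. mmult n (G t) (L t) i j) has_field_derivative mmult n G' (L t0) i j + mmult n (G t0) L' i j) (at t0)"
      unfolding mmult_def by (auto intro!: derivative_eq_intros dG dL simp: sum.distrib mult.commute)
    moreover have "\<forall>\<^sub>F t in nhds t0. mmult n (G t) (L t) i j = mone i j"
      using ev by (rule eventually_mono) (use ij in \<open>simp add: meq_def\<close>)
    ultimately have "((\<lambda>t. mone i j) has_field_derivative mmult n G' (L t0) i j + mmult n (G t0) L' i j) (at t0)"
      by (simp add: DERIV_cong_ev)
    then show ?thesis
      using DERIV_unique DERIV_const by blast
  qed
  then have "meq n (mmult n (G t0) L') (\<lambda>i j. - mmult n G' (L t0) i j)"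
    by (simp add: meq_def eq_neg_iff_add_eq_0 add.commute)
  then have "meq n L' (mmult n (L t0) (\<lambda>i j. - mmult n G' (L t0) i j))"
    by (rule meq_solve_left[OF LG])
  then show ?thesis
    using lk by (simp add: meq_def mmult_def sum_negf)
qed

lemma metric_u_field_differentiable:
  assumes "distinct_on n (\<psi> t0)"
    and d\<psi>: "\<And>c. c \<in> {1..n} \<Longrightarrow> ((\<lambda>t. \<psi> t c) has_field_derivative \<psi>' c) (at t0)"
  shows "(\<lambda>t. metric_u n (\<psi> t) i j) field_differentiable at t0"
proof -
  note [derivative_intros] = has_field_derivative_prod
  have "(\<Prod>e\<in>{1..n}-{c}. \<psi> t0 c - \<psi> t0 e) \<noteq> 0" if "c \<in> {1..n}" for c
    using prod_diff_nonzero[OF assms(1) that] .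
  then show ?thesis
    unfolding metric_u_def mmult_def mtransp_def esym_jac_inv_def field_differentiable_def
    by (intro exI) (auto intro!: derivative_eq_intros d\<psi>)
qed

lemma pd_gL_eq:
  assumes n: "n \<ge> 2" and a: "distinct_on n a" "nonzero_on n a" and s: "s \<in> {1..n}"
    and lk: "l \<in> {1..n}" "k \<in> {1..n}" and v: "\<And>m. m \<in> {1..n} \<Longrightarrow> v m = esym {1..n} m a"
  shows "pd (\<lambda>v. gL n v l k) v s = - mmult n (metric_u n a) (mmult n (cometric_u_dir n a s) (metric_u n a)) l k"
proof -
  define t0 where "t0 = esym {1..n} s a"
  obtain N \<psi> \<psi>' where N: "open N" "t0 \<in> N"
    and \<psi>N: "\<And>t. t \<in> N \<Longrightarrow> distinct_on n (\<psi> t) \<and> nonzero_on n (\<psi> t)"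
    and \<psi>e: "\<And>t m. t \<in> N \<Longrightarrow> m \<in> {1..n} \<Longrightarrow> esym {1..n} m (\<psi> t) = (if m = s then t else esym {1..n} m a)"
    and \<psi>0: "\<psi> t0 = a"
    and d\<psi>: "\<And>c. c \<in> {1..n} \<Longrightarrow> ((\<lambda>t. \<psi> t c) has_field_derivative \<psi>' c) (at t0)"
    using coordinate_line_lift[OF a s] unfolding t0_def by metis
  have evN: "\<forall>\<^sub>F t in nhds t0. t \<in> N"
    using N by (simp add: eventually_nhds_in_open)
  have dir: "(\<Sum>c\<in>{1..n}. \<psi>' c * cometric_u_partial n (\<psi> t0) c i j) = cometric_u_dir n a s i j" for i j
    unfolding cometric_u_dir_def \<psi>0
    by (intro sum.cong refl) (simp only: lift_velocity[OF a(1) s N \<psi>e \<psi>0 d\<psi>])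
  have dG: "((\<lambda>t. cometric_u n (\<psi> t) i j) has_field_derivative cometric_u_dir n a s i j) (at t0)" for i j
    unfolding dir[symmetric] by (rule has_field_derivative_cometric_u) (rule d\<psi>)
  define L' where "L' i j = deriv (\<lambda>t. metric_u n (\<psi> t) i j) t0" for i j
  have dL: "((\<lambda>t. metric_u n (\<psi> t) i j) has_field_derivative L' i j) (at t0)" for i j
    unfolding L'_def DERIV_deriv_iff_field_differentiable
    by (rule metric_u_field_differentiable) (use \<psi>N[OF N(2)] d\<psi> in auto)
  have "L' l k = - mmult n (metric_u n (\<psi> t0)) (mmult n (cometric_u_dir n a s) (metric_u n (\<psi> t0))) l k"
  proof (rule has_field_derivative_mat_inverse[OF _ dG dL _ lk])
    show "\<forall>\<^sub>F t in nhds t0. meq n (mmult n (cometric_u n (\<psi> t)) (metric_u n (\<psi> t))) mone"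
      using evN by (rule eventually_mono) (use \<psi>N cometric_u_right_inverse[OF n] in blast)
    show "meq n (mmult n (metric_u n (\<psi> t0)) (cometric_u n (\<psi> t0))) mone"
      using cometric_u_left_inverse[OF n a(1)] \<psi>0 by simp
  qed
  moreover have "\<forall>\<^sub>F t in nhds t0. gL n (v(s := t)) l k = metric_u n (\<psi> t) l k"
    using evN by (rule eventually_mono) (use \<psi>N \<psi>e v in \<open>auto intro!: gL_eq_metric_u[OF n _ _ _ lk]\<close>)
  then have "pd (\<lambda>v. gL n v l k) v s = deriv (\<lambda>t. metric_u n (\<psi> t) l k) t0"
    unfolding pd_def using v[OF s] by (intro deriv_cong_ev) (simp_all add: t0_def)
  ultimately show ?thesis
    using DERIV_imp_deriv[OF dL] \<psi>0 by simp
qed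

section \<open>A closed formula for the contravariant Christoffel symbols\<close>

definition cometric_ua :: "nat \<Rightarrow> (nat \<Rightarrow> complex) \<Rightarrow> nat \<Rightarrow> nat \<Rightarrow> complex"
  where "cometric_ua n a = mmult n (mtransp (esym_jac n a)) cometric_a"

definition christoffel_X :: "nat \<Rightarrow> (nat \<Rightarrow> complex) \<Rightarrow> nat \<Rightarrow> nat \<Rightarrow> nat \<Rightarrow> complex"
  where "christoffel_X n a k x y = (\<Sum>c\<in>{1..n}. cometric_ua n a x c *
    (\<Sum>d\<in>{1..n}. esym_jac_deriv n a c d y * esym_jac_inv n a k d))"

definition christoffel_Y :: "nat \<Rightarrow> (nat \<Rightarrow> complex) \<Rightarrow> nat \<Rightarrow> nat \<Rightarrow> nat \<Rightarrow> complex"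
  where "christoffel_Y n a k x y = (\<Sum>c\<in>{1..n}. cometric_ua n a x c *
    mmult n (cometric_ua n a) (mmult n (esym_jac_deriv n a c) (metric_u n a)) y k)"

lemma cometric_u_cancel_left:
  assumes "n \<ge> 2" "distinct_on n a" "i \<in> {1..n}"
  shows "(\<Sum>l\<in>{1..n}. cometric_u n a i l * mmult n (metric_u n a) X l k) = X i k"
proof -
  have "(\<Sum>l\<in>{1..n}. cometric_u n a i l * mmult n (metric_u n a) X l k)
      = mmult n (mmult n (cometric_u n a) (metric_u n a)) X i k"
    by (simp add: mmult_assoc mmult_def)
  also have "\<dots> = mmult n mone X i k"
    by (rule mmult_cong_left[OF cometric_u_right_inverse[OF assms(1,2)] assms(3)])
  also have "\<dots> = X i k"
    by (rule mmult_mone_left[OF assms(3)])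
  finally show ?thesis .
qed

lemma cometric_u_cancel_right:
  assumes "n \<ge> 2" "distinct_on n a" "s \<in> {1..n}"
  shows "(\<Sum>j\<in>{1..n}. mmult n X (metric_u n a) i j * cometric_u n a j s) = X i s"
proof -
  have "(\<Sum>j\<in>{1..n}. mmult n X (metric_u n a) i j * cometric_u n a j s)
      = mmult n X (mmult n (metric_u n a) (cometric_u n a)) i s"
    by (simp add: mmult_assoc[symmetric] mmult_def)
  also have "\<dots> = mmult n X mone i s"
    by (rule mmult_cong_right[OF cometric_u_left_inverse[OF assms(1,2)] assms(3)])
  also have "\<dots> = X i s"
    by (rule mmult_mone_right[OF assms(3)])
  finally show ?thesis .
qed

lemma mmult_cometric_u_esym_jac_inv:
  assumes "distinct_on n a" "c \<in> {1..n}"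
  shows "mmult n (cometric_u n a) (esym_jac_inv n a) x c = cometric_ua n a x c"
proof -
  have "mmult n (cometric_u n a) (esym_jac_inv n a) x c
      = mmult n (cometric_ua n a) (mmult n (esym_jac n a) (esym_jac_inv n a)) x c"
    by (simp add: cometric_u_def cometric_ua_def mmult_assoc)
  also have "\<dots> = mmult n (cometric_ua n a) mone x c"
    by (rule mmult_cong_right[OF esym_jac_right_inverse[OF assms(1)] assms(2)])
  also have "\<dots> = cometric_ua n a x c"
    by (rule mmult_mone_right[OF assms(2)])
  finally show ?thesis .
qed

lemma cometric_a_esym_jac_metric_u:
  assumes "n \<ge> 2" "distinct_on n a"
  shows "meq n (mmult n cometric_a (mmult n (esym_jac n a) (metric_u n a))) (mtransp (esym_jac_inv n a))"
proof -
  have "meq n (mmult n (esym_jac n a) (metric_u n a)) (mmult n (metric_a n) (mtransp (esym_jac_inv n a)))"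
    using mmult_cancel[OF esym_jac_right_inverse[OF assms(2)]] by (simp add: metric_u_def mmult_assoc)
  then have "meq n (mmult n cometric_a (mmult n (esym_jac n a) (metric_u n a)))
      (mmult n cometric_a (mmult n (metric_a n) (mtransp (esym_jac_inv n a))))"
    by (rule meq_mmult_right)
  then show ?thesis
    using mmult_cancel[OF cometric_a_right_inverse[OF assms(1)]] by (rule meq_trans)
qed

lemma cometric_u_partial_eq_mmult:
  "cometric_u_partial n a c i j =
     mmult n (mmult n (mtransp (esym_jac_deriv n a c)) cometric_a) (esym_jac n a) i j
   + mmult n (cometric_ua n a) (esym_jac_deriv n a c) i j"
proof -
  let ?T = "esym_jac_deriv n a c" and ?A = "esym_jac n a"
  have "mmult n (mmult n (mtransp ?T) cometric_a) ?A i j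
      = (\<Sum>k\<in>{1..n}. \<Sum>l\<in>{1..n}. cometric_a k l * (?T k i * ?A l j))"
    unfolding mmult_def mtransp_def sum_distrib_right
    by (subst sum.swap) (simp add: mult_ac)
  moreover have "mmult n (cometric_ua n a) ?T i j
      = (\<Sum>k\<in>{1..n}. \<Sum>l\<in>{1..n}. cometric_a k l * (?A k i * ?T l j))"
    unfolding cometric_ua_def mmult_def mtransp_def sum_distrib_right
    by (subst sum.swap) (simp add: mult_ac)
  ultimately show ?thesis
    by (simp add: cometric_u_partial_def sum.distrib distrib_left)
qed

lemma cometric_u_partial_eq_cometric_ua:
  "cometric_u_partial n a d i s =
     (\<Sum>m\<in>{1..n}. esym_jac_deriv n a d m i * cometric_ua n a s m)
   + (\<Sum>l\<in>{1..n}. cometric_ua n a i l * esym_jac_deriv n a d l s)"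
proof -
  have "mmult n (mmult n (mtransp (esym_jac_deriv n a d)) cometric_a) (esym_jac n a) i s
      = (\<Sum>m\<in>{1..n}. \<Sum>l\<in>{1..n}. esym_jac_deriv n a d m i * (cometric_a m l * esym_jac n a l s))"
    unfolding mmult_def mtransp_def sum_distrib_right sum_distrib_left
    by (subst sum.swap) (simp add: mult_ac)
  also have "\<dots> = (\<Sum>m\<in>{1..n}. esym_jac_deriv n a d m i * cometric_ua n a s m)"
    unfolding cometric_ua_def mmult_def mtransp_def sum_distrib_left
    by (intro sum.cong refl) (simp add: cometric_a_def)
  finally show ?thesis
    unfolding cometric_u_partial_eq_mmult by (simp add: mmult_def)
qed

lemma cometric_u_partial_mult_metric_u:
  assumes "n \<ge> 2" "distinct_on n a" "k \<in> {1..n}"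
  shows "mmult n (cometric_u_partial n a c) (metric_u n a) y k =
    (\<Sum>d\<in>{1..n}. esym_jac_deriv n a c d y * esym_jac_inv n a k d)
    + mmult n (cometric_ua n a) (mmult n (esym_jac_deriv n a c) (metric_u n a)) y k"
proof -
  let ?T = "esym_jac_deriv n a c"
  have "mmult n (cometric_u_partial n a c) (metric_u n a) y k
      = mmult n (mtransp ?T) (mmult n cometric_a (mmult n (esym_jac n a) (metric_u n a))) y k
      + mmult n (cometric_ua n a) (mmult n ?T (metric_u n a)) y k"
    unfolding cometric_u_partial_eq_mmult[abs_def] mmult_add_left by (simp add: mmult_assoc)
  also have "mmult n (mtransp ?T) (mmult n cometric_a (mmult n (esym_jac n a) (metric_u n a))) y k
      = mmult n (mtransp ?T) (mtransp (esym_jac_inv n a)) y k"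
    by (rule mmult_cong_right[OF cometric_a_esym_jac_metric_u[OF assms(1,2)] assms(3)])
  finally show ?thesis
    by (simp add: mmult_def mtransp_def)
qed

lemma cometric_u_dir_eq_christoffel_X:
  "cometric_u_dir n a k y x = christoffel_X n a k x y + christoffel_X n a k y x"
proof -
  let ?V = "cometric_ua n a" and ?T = "esym_jac_deriv n a" and ?B = "esym_jac_inv n a"
  have "cometric_u_dir n a k y x = (\<Sum>d\<in>{1..n}. \<Sum>m\<in>{1..n}. ?V x m * (?T d m y * ?B k d))
      + (\<Sum>d\<in>{1..n}. \<Sum>l\<in>{1..n}. ?V y l * (?T d l x * ?B k d))"
    unfolding cometric_u_dir_def cometric_u_partial_eq_cometric_ua
    by (simp add: distrib_left sum.distrib sum_distrib_left mult_ac)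
  also have "(\<Sum>d\<in>{1..n}. \<Sum>m\<in>{1..n}. ?V x m * (?T d m y * ?B k d)) = christoffel_X n a k x y"
    unfolding christoffel_X_def sum_distrib_left
    by (subst sum.swap) (intro sum.cong refl, simp add: esym_jac_deriv_symmetric)
  also have "(\<Sum>d\<in>{1..n}. \<Sum>l\<in>{1..n}. ?V y l * (?T d l x * ?B k d)) = christoffel_X n a k y x"
    unfolding christoffel_X_def sum_distrib_left
    by (subst sum.swap) (intro sum.cong refl, simp add: esym_jac_deriv_symmetric)
  finally show ?thesis .
qed

lemma cometric_u_contract_dir:
  assumes "n \<ge> 2" "distinct_on n a" "k \<in> {1..n}"
  shows "(\<Sum>j\<in>{1..n}. cometric_u n a x j * mmult n (cometric_u_dir n a j) (metric_u n a) y k)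
    = christoffel_X n a k x y + christoffel_Y n a k x y"
proof -
  let ?L = "metric_u n a" and ?B = "esym_jac_inv n a" and ?E = "cometric_u_partial n a"
  have "(\<Sum>j\<in>{1..n}. cometric_u n a x j * mmult n (cometric_u_dir n a j) ?L y k)
      = (\<Sum>j\<in>{1..n}. \<Sum>c\<in>{1..n}. cometric_u n a x j * ?B j c * mmult n (?E c) ?L y k)"
    unfolding cometric_u_dir_def mmult_def
    by (simp add: sum_distrib_left sum_distrib_right mult_ac) (subst sum.swap, simp add: sum.swap[of _ "{1..n}"])
  also have "\<dots> = (\<Sum>c\<in>{1..n}. mmult n (cometric_u n a) ?B x c * mmult n (?E c) ?L y k)"
    unfolding mmult_def by (subst sum.swap) (simp add: sum_distrib_right)
  also have "\<dots> = (\<Sum>c\<in>{1..n}. cometric_ua n a x c * mmult n (?E c) ?L y k)"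
    using assms(2) by (intro sum.cong refl) (simp add: mmult_cometric_u_esym_jac_inv)
  also have "\<dots> = christoffel_X n a k x y + christoffel_Y n a k x y"
    using assms by (simp add: cometric_u_partial_mult_metric_u christoffel_X_def christoffel_Y_def
        distrib_left sum.distrib)
  finally show ?thesis .
qed

lemma christoffel_Y_symmetric: "christoffel_Y n a k x y = christoffel_Y n a k y x"
proof -
  let ?V = "cometric_ua n a" and ?TL = "\<lambda>c. mmult n (esym_jac_deriv n a c) (metric_u n a)"
  have TL: "?TL c e k = ?TL e c k" if "c \<in> {1..n}" "e \<in> {1..n}" for c e
    unfolding mmult_def using that by (intro sum.cong refl) (simp add: esym_jac_deriv_symmetric)
  have "christoffel_Y n a k x y = (\<Sum>c\<in>{1..n}. \<Sum>e\<in>{1..n}. ?V x c * ?V y e * ?TL c e k)"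
    unfolding christoffel_Y_def mmult_def by (simp add: sum_distrib_left mult.assoc)
  also have "\<dots> = (\<Sum>e\<in>{1..n}. \<Sum>c\<in>{1..n}. ?V y e * ?V x c * ?TL e c k)"
    by (subst sum.swap) (intro sum.cong refl, simp add: TL mult.commute)
  also have "\<dots> = christoffel_Y n a k y x"
    unfolding christoffel_Y_def mmult_def by (simp add: sum_distrib_left mult.assoc)
  finally show ?thesis .
qed

text \<open>Substituting \<open>\<partial>\<^sub>x L = - L (\<partial>\<^sub>x G) L\<close> into the Koszul formula.\<close>

lemma GamC_eq_dir_contractions:
  assumes n: "n \<ge> 2" and a: "distinct_on n a" "nonzero_on n a"
    and s: "s \<in> {1..n}" and i: "i \<in> {1..n}" and k: "k \<in> {1..n}"
    and u: "\<And>m. m \<in> {1..n} \<Longrightarrow> u m = esym {1..n} m a"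
  shows "GamC n s i k u = (1/2) *
    ((\<Sum>j\<in>{1..n}. cometric_u n a s j * mmult n (cometric_u_dir n a j) (metric_u n a) i k)
    + cometric_u_dir n a k i s
    - (\<Sum>l\<in>{1..n}. cometric_u n a i l * mmult n (cometric_u_dir n a l) (metric_u n a) s k))"
proof -
  let ?G = "cometric_u n a" and ?L = "metric_u n a"
  define M where "M x = mmult n (cometric_u_dir n a x) ?L" for x
  have gU: "gU n x y u = ?G x y" if "x \<in> {1..n}" "y \<in> {1..n}" for x y
    by (rule gU_eq_cometric_u[OF a u that])
  have pdL: "pd (\<lambda>v. gL n v y z) u x = - mmult n ?L (M x) y z"
    if "x \<in> {1..n}" "y \<in> {1..n}" "z \<in> {1..n}" for x y z
    unfolding M_def by (rule pd_gL_eq[OF n a that u])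
  have GL: "(\<Sum>l\<in>{1..n}. ?G i l * mmult n ?L X l z) = X i z" for X z
    by (rule cometric_u_cancel_left[OF n a(1) i])
  have koszul: "(\<Sum>l = 1..n. gU n i l u * (pd (\<lambda>v. gL n v l k) u j + pd (\<lambda>v. gL n v l j) u k - pd (\<lambda>v. gL n v j k) u l))
      = - M j i k - M k i j + (\<Sum>l\<in>{1..n}. ?G i l * mmult n ?L (M l) j k)" if j: "j \<in> {1..n}" for j
  proof -
    have "(\<Sum>l = 1..n. gU n i l u * (pd (\<lambda>v. gL n v l k) u j + pd (\<lambda>v. gL n v l j) u k - pd (\<lambda>v. gL n v j k) u l))
      = (\<Sum>l\<in>{1..n}. - (?G i l * mmult n ?L (M j) l k) - ?G i l * mmult n ?L (M k) l j + ?G i l * mmult n ?L (M l) j k)"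
      using pdL j k gU[OF i] by (intro sum.cong refl) (simp add: algebra_simps)
    also have "\<dots> = - (\<Sum>l\<in>{1..n}. ?G i l * mmult n ?L (M j) l k) - (\<Sum>l\<in>{1..n}. ?G i l * mmult n ?L (M k) l j)
        + (\<Sum>l\<in>{1..n}. ?G i l * mmult n ?L (M l) j k)"
      by (simp add: sum.distrib sum_subtractf sum_negf)
    also have "\<dots> = - M j i k - M k i j + (\<Sum>l\<in>{1..n}. ?G i l * mmult n ?L (M l) j k)"
      unfolding GL ..
    finally show ?thesis .
  qed
  have "GamC n s i k u = - (\<Sum>j\<in>{1..n}. ?G s j * ((1/2) *
      (- M j i k - M k i j + (\<Sum>l\<in>{1..n}. ?G i l * mmult n ?L (M l) j k))))"
    unfolding GamC_def Gam_def using gU[OF s] koszul by (intro arg_cong[where f = uminus] sum.cong) auto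
  also have "\<dots> = (1/2) * ((\<Sum>j\<in>{1..n}. ?G s j * M j i k) + (\<Sum>j\<in>{1..n}. ?G s j * M k i j)
      - (\<Sum>j\<in>{1..n}. ?G s j * (\<Sum>l\<in>{1..n}. ?G i l * mmult n ?L (M l) j k)))"
    by (simp add: sum_distrib_left sum.distrib sum_subtractf sum_negf algebra_simps)
  also have "(\<Sum>j\<in>{1..n}. ?G s j * M k i j) = cometric_u_dir n a k i s"
    using cometric_u_cancel_right[OF n a(1) s, of "cometric_u_dir n a k" i]
    by (simp add: M_def cometric_u_symmetric[of n a s] mult.commute)
  also have "(\<Sum>j\<in>{1..n}. ?G s j * (\<Sum>l\<in>{1..n}. ?G i l * mmult n ?L (M l) j k))
      = (\<Sum>l\<in>{1..n}. ?G i l * (\<Sum>j\<in>{1..n}. ?G s j * mmult n ?L (M l) j k))"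
    by (simp add: sum_distrib_left mult_ac) (rule sum.swap)
  also have "\<dots> = (\<Sum>l\<in>{1..n}. ?G i l * M l s k)"
    unfolding cometric_u_cancel_left[OF n a(1) s] ..
  finally show ?thesis
    by (simp add: M_def)
qed

text \<open>The symmetric part \<open>christoffel_Y\<close> cancels.\<close>

lemma GamC_eq_christoffel_X:
  assumes n: "n \<ge> 2" and a: "distinct_on n a" "nonzero_on n a"
    and s: "s \<in> {1..n}" and i: "i \<in> {1..n}" and k: "k \<in> {1..n}"
    and u: "\<And>m. m \<in> {1..n} \<Longrightarrow> u m = esym {1..n} m a"
  shows "GamC n s i k u = christoffel_X n a k s i"
proof -
  let ?X = "christoffel_X n a k" and ?Y = "christoffel_Y n a k"
  have "GamC n s i k u = (1/2) * ((?X s i + ?Y s i) + (?X s i + ?X i s) - (?X i s + ?Y i s))"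
    using GamC_eq_dir_contractions[OF n a s i k u]
    by (simp only: cometric_u_contract_dir[OF n a(1) k] cometric_u_dir_eq_christoffel_X)
  then show ?thesis
    using christoffel_Y_symmetric[of n a k s i] by (simp add: field_simps)
qed

section \<open>Polynomiality of the closed formula\<close>

text \<open>The divided difference of \<open>x\<^sup>m\<close> at the nodes \<open>a\<^sub>1, \<dots>, a\<^sub>n\<close>; it is the complete
  homogeneous symmetric polynomial of degree \<open>m + 1 - n\<close>.\<close>

definition divdiff_pow :: "nat \<Rightarrow> nat \<Rightarrow> (nat \<Rightarrow> complex) \<Rightarrow> complex" where
  "divdiff_pow n m a = (\<Sum>d\<in>{1..n}. a d ^ m / (\<Prod>e\<in>{1..n}-{d}. a d - a e))"

lemma divdiff_pow_low:
  assumes a: "distinct_on n a" and m: "m < n"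
  shows "divdiff_pow n m a = (if m = n - 1 then 1 else 0)"
proof -
  define k' where "k' = n - m"
  have k': "k' \<in> {1..n}" "n - k' = m" using m by (auto simp: k'_def)
  have one: "1 \<in> {1..n}" using m by auto
  have "mmult n (esym_jac_inv n a) (esym_jac n a) k' 1 = mone k' 1" using esym_jac_left_inverse[OF a] k' one by (simp add: meq_def)
  moreover have "mmult n (esym_jac_inv n a) (esym_jac n a) k' 1 = (-1)^(k'-1) * divdiff_pow n m a"
  proof -
    have "esym_jac n a d 1 = 1" for d by (simp add: esym_jac_def esym_0)
    then have "mmult n (esym_jac_inv n a) (esym_jac n a) k' 1 = (\<Sum>d\<in>{1..n}. (-1)^(k'-1) * (a d ^ m / (\<Prod>e\<in>{1..n}-{d}. a d - a e)))"
      unfolding mmult_def esym_jac_inv_def using k' by simp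
    then show ?thesis by (simp add: divdiff_pow_def sum_distrib_left)
  qed
  ultimately have e: "(-1)^(k'-1) * divdiff_pow n m a = mone k' 1" by simp
  show ?thesis
  proof (cases "m = n - 1")
    case True then have "k' = 1" using m by (simp add: k'_def)
    then show ?thesis using e True by (simp add: mone_def)
  next
    case False then have "k' \<noteq> 1" using m by (auto simp: k'_def)
    then show ?thesis using e False by (simp add: mone_def)
  qed
qed

lemma power_eq_lower_powers:
  assumes "d \<in> {1..n}"
  shows "a d ^ n = - (\<Sum>j<n. (-1)^(n-j) * esym {1..n} (n-j) a * a d ^ j)"
proof -
  have z: "(\<Prod>c\<in>{1..n}. a d - a c) = 0" using assms by (intro prod_zero) auto
  have v: "(\<Prod>c\<in>{1..n}. a d - a c) = (\<Sum>j\<le>n. (-1)^(n - j) * esym {1..n} (n - j) a * a d ^ j)"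
    using prod_diff_esym_expansion[of "{1..n}" "a d" a] by simp
  have "(\<Sum>j\<le>n. (-1)^(n - j) * esym {1..n} (n - j) a * a d ^ j) = 0" using z unfolding v .
  then have "(\<Sum>j<n. (-1)^(n - j) * esym {1..n} (n - j) a * a d ^ j) + a d ^ n = 0"
    by (simp add: lessThan_Suc_atMost[symmetric] esym_0)
  then show ?thesis by (simp add: eq_neg_iff_add_eq_0 add.commute)
qed

lemma divdiff_pow_rec:
  assumes m: "n \<le> m"
  shows "divdiff_pow n m a = - (\<Sum>j<n. (-1)^(n-j) * esym {1..n} (n-j) a * divdiff_pow n (m - n + j) a)"
proof -
  have pw: "a d ^ m = - (\<Sum>j<n. (-1)^(n-j) * esym {1..n} (n-j) a * a d ^ (m - n + j))" if d: "d \<in> {1..n}" for d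
  proof -
    have "a d ^ m = a d ^ (m - n) * a d ^ n" using m by (simp flip: power_add)
    also have "\<dots> = - (\<Sum>j<n. (-1)^(n-j) * esym {1..n} (n-j) a * (a d ^ (m - n) * a d ^ j))"
      by (simp add: power_eq_lower_powers[OF d] sum_distrib_left mult_ac)
    also have "\<dots> = - (\<Sum>j<n. (-1)^(n-j) * esym {1..n} (n-j) a * a d ^ (m - n + j))"
      by (simp add: power_add)
    finally show ?thesis .
  qed
  have "divdiff_pow n m a = (\<Sum>d\<in>{1..n}. - (\<Sum>j<n. (-1)^(n-j) * esym {1..n} (n-j) a * (a d ^ (m - n + j) / (\<Prod>e\<in>{1..n}-{d}. a d - a e))))"
    unfolding divdiff_pow_def by (intro sum.cong refl) (simp add: pw sum_divide_distrib)
  also have "\<dots> = - (\<Sum>j<n. (-1)^(n-j) * esym {1..n} (n-j) a * divdiff_pow n (m - n + j) a)"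
    unfolding divdiff_pow_def by (simp add: sum_negf sum_distrib_left) (rule sum.swap)
  finally show ?thesis .
qed

lemma divdiff_pow_poly_fun:
  assumes n: "n > 0"
  shows "\<exists>P \<in> poly_fun {1..n} (m + 1 - n). \<forall>a. distinct_on n a \<longrightarrow> divdiff_pow n m a = P a"
proof (induction m rule: less_induct)
  case (less m)
  have fin: "finite {1..n::nat}"
    by simp
  show ?case
  proof (cases "m < n")
    case True
    then show ?thesis
      by (intro bexI[of _ "\<lambda>_. if m = n - 1 then 1 else 0"] poly_fun_const fin)
        (simp add: divdiff_pow_low[OF _ True])
  next
    case False
    then have mn: "n \<le> m"
      by simp
    let ?term = "\<lambda>j a. (-1)^(n - j) * esym {1..n} (n - j) a * divdiff_pow n (m - n + j) a"
    have "\<exists>T \<in> poly_fun {1..n} (m + 1 - n). \<forall>a. distinct_on n a \<longrightarrow> ?term j a = T a"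
      if j: "j < n" for j
    proof (cases "m - n + j + 1 < n")
      case True
      then have "divdiff_pow n (m - n + j) a = 0" if "distinct_on n a" for a
        using divdiff_pow_low[OF that, of "m - n + j"] by simp
      then show ?thesis
        by (intro bexI[of _ "\<lambda>_. 0"] poly_fun_const fin) simp
    next
      case False
      have "m - n + j < m"
        using j mn n by simp
      then obtain P where P: "P \<in> poly_fun {1..n} (m - n + j + 1 - n)"
        and P_eq: "\<forall>a. distinct_on n a \<longrightarrow> divdiff_pow n (m - n + j) a = P a"
        using less[of "m - n + j"] by blast
      have deg: "(n - j) + (m - n + j + 1 - n) = m + 1 - n"
        using False j mn by simp
      have "(\<lambda>a. esym {1..n} (n - j) a * P a) \<in> poly_fun {1..n} ((n - j) + (m - n + j + 1 - n))"
        by (rule poly_fun_mult[OF fin poly_fun_esym[OF fin subset_refl] P])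
      then have "(\<lambda>a. (-1)^(n - j) * (esym {1..n} (n - j) a * P a)) \<in> poly_fun {1..n} (m + 1 - n)"
        unfolding deg by (rule poly_fun_cmult)
      with P_eq show ?thesis
        by (metis (no_types, lifting) mult.assoc)
    qed
    then obtain T where T: "\<And>j. j < n \<Longrightarrow> T j \<in> poly_fun {1..n} (m + 1 - n)"
      and T_eq: "\<And>j a. j < n \<Longrightarrow> distinct_on n a \<Longrightarrow> ?term j a = T j a"
      using bchoice[of "{..<n}"] by (metis lessThan_iff)
    have "(\<lambda>a. - (\<Sum>j<n. T j a)) \<in> poly_fun {1..n} (m + 1 - n)"
      using T by (intro poly_fun_uminus poly_fun_sum fin) auto
    moreover have "divdiff_pow n m a = - (\<Sum>j<n. T j a)" if "distinct_on n a" for a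
      unfolding divdiff_pow_rec[OF mn] using T_eq[OF _ that] by simp
    ultimately show ?thesis
      by (intro bexI[of _ "\<lambda>a. - (\<Sum>j<n. T j a)"]) auto
  qed
qed

text \<open>Polynomials in \<open>b\<^sub>0, \<dots>, b\<^sub>n\<close> whose value at \<open>a(0 := a\<^sub>d)\<close> is the corresponding
  quantity with \<open>a\<^sub>d\<close> singled out: \<open>cometric_ua_row c\<close> is the \<open>s\<close>-th row of \<open>cometric_ua\<close>,
  \<open>esym_deleted m\<close> is \<open>esym ({1..n} - {d}) m\<close>, and \<open>christoffel_W\<close> is the inner sum of
  \<open>christoffel_X\<close>.\<close>

context
  fixes n s i :: nat
begin

definition jac_colsum :: "(nat \<Rightarrow> complex) \<Rightarrow> complex"
  where "jac_colsum b = (\<Sum>e\<in>{1..n}. esym ({1..n} - {e}) (s - 1) b)"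

definition cometric_ua_row :: "nat \<Rightarrow> (nat \<Rightarrow> complex) \<Rightarrow> complex"
  where "cometric_ua_row c b = 4 * (jac_colsum b - esym ({1..n} - {c}) (s - 1) b)"

definition cometric_ua_row_esym :: "nat \<Rightarrow> (nat \<Rightarrow> complex) \<Rightarrow> complex"
  where "cometric_ua_row_esym r b = (\<Sum>c\<in>{1..n}. cometric_ua_row c b * esym ({1..n} - {c}) r b)"

definition esym_deleted :: "nat \<Rightarrow> (nat \<Rightarrow> complex) \<Rightarrow> complex"
  where "esym_deleted m b = (\<Sum>q\<le>m. (- b 0)^q * esym {1..n} (m - q) b)"

definition christoffel_W :: "(nat \<Rightarrow> complex) \<Rightarrow> complex"
  where "christoffel_W b = (\<Sum>q\<le>i - 2. (- b 0)^q * (cometric_ua_row_esym (i - 2 - q) b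
    - 4 * (jac_colsum b - esym_deleted (s - 1) b) * esym_deleted (i - 2 - q) b))"

lemma cometric_ua_eq_row:
  assumes "c \<in> {1..n}"
  shows "cometric_ua n a s c = cometric_ua_row c a"
proof -
  have "cometric_ua n a s c = (\<Sum>e\<in>{1..n}. esym_jac n a e s * cometric_a e c)"
    by (simp add: cometric_ua_def mmult_def mtransp_def)
  also have "\<dots> = (\<Sum>e\<in>{1..n}. 4 * esym_jac n a e s) - 4 * esym_jac n a c s"
    using assms by (simp add: sum.remove[of _ c] cometric_a_def sum_distrib_left[symmetric] algebra_simps
        sum.cong[of "{1..n} - {c}" _ _ "\<lambda>e. 4 * esym_jac n a e s"])
  also have "\<dots> = cometric_ua_row c a"
    by (simp add: cometric_ua_row_def jac_colsum_def esym_jac_def sum_distrib_left algebra_simps)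
  finally show ?thesis .
qed

lemma esym_fun_upd_0: "J \<subseteq> {1..n} \<Longrightarrow> esym J r (a(0 := x)) = esym J r a"
  by (rule esym_cong) auto

lemma jac_colsum_fun_upd_0: "jac_colsum (a(0 := x)) = jac_colsum a"
  unfolding jac_colsum_def by (intro sum.cong refl esym_fun_upd_0) auto

lemma cometric_ua_row_fun_upd_0: "cometric_ua_row c (a(0 := x)) = cometric_ua_row c a"
  unfolding cometric_ua_row_def jac_colsum_fun_upd_0 by (simp add: esym_fun_upd_0)

lemma cometric_ua_row_esym_fun_upd_0: "cometric_ua_row_esym r (a(0 := x)) = cometric_ua_row_esym r a"
  unfolding cometric_ua_row_esym_def by (intro sum.cong refl) (simp add: cometric_ua_row_fun_upd_0 esym_fun_upd_0)

lemma esym_deleted_eq: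
  assumes "d \<in> {1..n}"
  shows "esym_deleted m (a(0 := a d)) = esym ({1..n} - {d}) m a"
proof -
  have "esym ({1..n} - {d}) m a = (\<Sum>q\<le>m. (- a d)^q * esym (insert d ({1..n} - {d})) (m - q) a)"
    by (rule esym_remove_expansion) auto
  also have "insert d ({1..n} - {d}) = {1..n}" using assms by auto
  finally show ?thesis unfolding esym_deleted_def by (simp add: esym_fun_upd_0)
qed

lemma christoffel_W_eq:
  assumes d: "d \<in> {1..n}" and i2: "2 \<le> i"
  shows "(\<Sum>c\<in>{1..n}. cometric_ua n a s c * esym_jac_deriv n a c d i) = christoffel_W (a(0 := a d))"
proof -
  let ?y = "i - 2"
  have "(\<Sum>c\<in>{1..n}. cometric_ua n a s c * esym_jac_deriv n a c d i) = (\<Sum>c\<in>{1..n}-{d}. cometric_ua_row c a * esym ({1..n} - {d} - {c}) ?y a)"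
  proof (rule sum.mono_neutral_cong_right)
    show "\<forall>c\<in>{1..n} - ({1..n} - {d}). cometric_ua n a s c * esym_jac_deriv n a c d i = 0" by (auto simp: esym_jac_deriv_def)
    fix c assume "c \<in> {1..n} - {d}"
    then show "cometric_ua n a s c * esym_jac_deriv n a c d i = cometric_ua_row c a * esym ({1..n} - {d} - {c}) ?y a"
      using i2 by (simp add: cometric_ua_eq_row esym_jac_deriv_def)
  qed auto
  also have "\<dots> = (\<Sum>c\<in>{1..n}-{d}. \<Sum>q\<le>?y. (- a d)^q * (cometric_ua_row c a * esym ({1..n} - {c}) (?y - q) a))"
  proof (intro sum.cong refl)
    fix c assume c: "c \<in> {1..n} - {d}"
    have "esym ({1..n} - {d} - {c}) ?y a = (\<Sum>q\<le>?y. (- a d)^q * esym (insert d ({1..n} - {d} - {c})) (?y - q) a)"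
      by (rule esym_remove_expansion) auto
    also have "insert d ({1..n} - {d} - {c}) = {1..n} - {c}" using c d by auto
    finally show "cometric_ua_row c a * esym ({1..n} - {d} - {c}) ?y a = (\<Sum>q\<le>?y. (- a d)^q * (cometric_ua_row c a * esym ({1..n} - {c}) (?y - q) a))"
      by (simp add: sum_distrib_left mult_ac)
  qed
  also have "\<dots> = (\<Sum>q\<le>?y. (- a d)^q * (\<Sum>c\<in>{1..n}-{d}. cometric_ua_row c a * esym ({1..n} - {c}) (?y - q) a))"
    by (subst sum.swap) (simp add: sum_distrib_left)
  also have "\<dots> = (\<Sum>q\<le>?y. (- a d)^q * (cometric_ua_row_esym (?y - q) a - cometric_ua_row d a * esym ({1..n} - {d}) (?y - q) a))"
    using d by (simp add: cometric_ua_row_esym_def sum.remove[of _ d] algebra_simps)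
  also have "\<dots> = christoffel_W (a(0 := a d))"
    unfolding christoffel_W_def cometric_ua_row_esym_fun_upd_0 jac_colsum_fun_upd_0 using d by (simp add: esym_deleted_eq cometric_ua_row_def)
  finally show ?thesis .
qed

lemma poly_fun_christoffel_W: "christoffel_W \<in> poly_fun {0..n} (s - 1 + (i - 2))"
proof -
  have fin: "finite {0..n::nat}" by simp
  have v0: "(\<lambda>b. - b 0) \<in> poly_fun {0..n} 1" using poly_fun_uminus[OF poly_fun_var[OF fin, of 0 1]] by simp
  have Yp: "jac_colsum \<in> poly_fun {0..n} (s - 1)" unfolding jac_colsum_def[abs_def]
    by (rule poly_fun_sum[OF fin]) (auto intro!: poly_fun_esym[OF fin])
  have Vp: "cometric_ua_row c \<in> poly_fun {0..n} (s - 1)" for c unfolding cometric_ua_row_def[abs_def]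
    by (rule poly_fun_cmult, rule poly_fun_diff[OF Yp], rule poly_fun_esym[OF fin]) auto
  have Pp: "cometric_ua_row_esym r \<in> poly_fun {0..n} (s - 1 + r)" for r unfolding cometric_ua_row_esym_def[abs_def]
  proof (rule poly_fun_sum[OF fin])
    fix c
    have "esym ({1..n} - {c}) r \<in> poly_fun {0..n} r" by (rule poly_fun_esym[OF fin]) auto
    then show "(\<lambda>b. cometric_ua_row c b * esym ({1..n} - {c}) r b) \<in> poly_fun {0..n} (s - 1 + r)"
      by (rule poly_fun_mult[OF fin Vp])
  qed simp
  have Ep: "esym_deleted m \<in> poly_fun {0..n} m" for m unfolding esym_deleted_def[abs_def]
  proof (rule poly_fun_sum[OF fin])
    fix q assume q: "q \<in> {..m}"
    have "(\<lambda>b. (- b 0)^q * esym {1..n} (m - q) b) \<in> poly_fun {0..n} (q * 1 + (m - q))"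
      by (rule poly_fun_mult[OF fin poly_fun_power[OF fin v0] poly_fun_esym[OF fin]]) auto
    then show "(\<lambda>b. (- b 0)^q * esym {1..n} (m - q) b) \<in> poly_fun {0..n} m" using q by simp
  qed simp
  have Vd: "(\<lambda>b. 4 * (jac_colsum b - esym_deleted (s - 1) b)) \<in> poly_fun {0..n} (s - 1)"
    by (rule poly_fun_cmult, rule poly_fun_diff[OF Yp Ep])
  show ?thesis unfolding christoffel_W_def[abs_def]
  proof (rule poly_fun_sum[OF fin])
    fix q assume q: "q \<in> {..i-2}"
    have "(\<lambda>b. cometric_ua_row_esym (i - 2 - q) b - 4 * (jac_colsum b - esym_deleted (s - 1) b)
        * esym_deleted (i - 2 - q) b) \<in> poly_fun {0..n} (s - 1 + (i - 2 - q))"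
      by (rule poly_fun_diff[OF Pp poly_fun_mult[OF fin Vd Ep]])
    from poly_fun_mult[OF fin poly_fun_power[OF fin v0] this]
    show "(\<lambda>b. (- b 0)^q * (cometric_ua_row_esym (i - 2 - q) b - 4 * (jac_colsum b - esym_deleted (s - 1) b)
        * esym_deleted (i - 2 - q) b)) \<in> poly_fun {0..n} (s - 1 + (i - 2))"
      by (rule poly_fun_mono[OF fin, rotated]) (use q in auto)
  qed simp
qed

end

lemma monomial_on_fun_upd_0: "monomial_on {0..n} \<alpha> (a(0 := x)) = x ^ \<alpha> 0 * monomial_on {1..n} \<alpha> a"
proof -
  have e: "{0..n} = insert 0 {1..n}" by auto
  have "monomial_on {0..n} \<alpha> (a(0 := x)) = x ^ \<alpha> 0 * (\<Prod>j\<in>{1..n}. (a(0 := x)) j ^ \<alpha> j)"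
    unfolding monomial_on_def e by (subst prod.insert) auto
  also have "(\<Prod>j\<in>{1..n}. (a(0 := x)) j ^ \<alpha> j) = monomial_on {1..n} \<alpha> a"
    unfolding monomial_on_def by (intro prod.cong) auto
  finally show ?thesis .
qed

lemma exps_upto_0_sum: "\<alpha> \<in> exps_upto {0..n} D \<Longrightarrow> \<alpha> 0 + sum \<alpha> {1..n} \<le> D"
  by (simp add: exps_upto_def sum.atLeast_Suc_atMost[of 0 n])

lemma sum_esym_jac_inv_monomial_on:
  "(\<Sum>d\<in>{1..n}. esym_jac_inv n a k d * monomial_on {0..n} \<alpha> (a(0 := a d)))
    = (-1)^(k - 1) * monomial_on {1..n} \<alpha> a * divdiff_pow n (\<alpha> 0 + (n - k)) a"
  unfolding monomial_on_fun_upd_0 esym_jac_inv_def divdiff_pow_def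
  by (simp add: sum_distrib_left sum_divide_distrib power_add mult_ac)

lemma christoffel_X_eq_sum_christoffel_W:
  assumes "2 \<le> i"
  shows "christoffel_X n a k s i = (\<Sum>d\<in>{1..n}. esym_jac_inv n a k d * christoffel_W n s i (a(0 := a d)))"
proof -
  have "christoffel_X n a k s i
      = (\<Sum>d\<in>{1..n}. esym_jac_inv n a k d * (\<Sum>c\<in>{1..n}. cometric_ua n a s c * esym_jac_deriv n a c d i))"
    unfolding christoffel_X_def by (simp add: sum_distrib_left sum_distrib_right mult_ac) (rule sum.swap)
  also have "\<dots> = (\<Sum>d\<in>{1..n}. esym_jac_inv n a k d * christoffel_W n s i (a(0 := a d)))"
    using christoffel_W_eq[OF _ assms] by (intro sum.cong refl) simp
  finally show ?thesis .
qed

lemma christoffel_X_poly_fun: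
  assumes n: "n \<ge> 2" and s: "s \<in> {1..n}" and i: "i \<in> {1..n}" and k: "k \<in> {1..n}"
  shows "\<exists>R \<in> poly_fun {1..n} (2 * n - 3). \<forall>a. distinct_on n a \<longrightarrow> christoffel_X n a k s i = R a"
proof (cases "2 \<le> i")
  case False
  then have "christoffel_X n a k s i = 0" for a
    by (simp add: christoffel_X_def esym_jac_deriv_def)
  then show ?thesis
    using poly_fun_const[of "{1..n}" 0] by auto
next
  case True
  have fin: "finite {1..n::nat}" "finite {0..n::nat}"
    by auto
  define D where "D = s - 1 + (i - 2)"
  obtain cW where cW: "\<And>b. christoffel_W n s i b = (\<Sum>\<alpha>\<in>exps_upto {0..n} D. cW \<alpha> * monomial_on {0..n} \<alpha> b)"
    using poly_fun_christoffel_W[of n s i] unfolding D_def poly_fun_def by blast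
  have "\<forall>m. \<exists>P \<in> poly_fun {1..n} (m + 1 - n). \<forall>a. distinct_on n a \<longrightarrow> divdiff_pow n m a = P a"
    using divdiff_pow_poly_fun n by simp
  then obtain P where P: "\<And>m. P m \<in> poly_fun {1..n} (m + 1 - n)"
    and divdiff: "\<And>m a. distinct_on n a \<Longrightarrow> divdiff_pow n m a = P m a"
    by metis
  define R where "R a = (\<Sum>\<alpha>\<in>exps_upto {0..n} D. cW \<alpha> * ((-1)^(k - 1) * monomial_on {1..n} \<alpha> a * P (\<alpha> 0 + (n - k)) a))" for a
  have "(\<lambda>a. monomial_on {1..n} \<alpha> a * P (\<alpha> 0 + (n - k)) a) \<in> poly_fun {1..n} D" if "\<alpha> \<in> exps_upto {0..n} D" for \<alpha>
  proof (rule poly_fun_mono[OF fin(1) _ poly_fun_mult[OF fin(1) poly_fun_monomial_on[OF fin(1)] P]])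
    show "sum \<alpha> {1..n} + (\<alpha> 0 + (n - k) + 1 - n) \<le> D"
      using exps_upto_0_sum[OF that] k by auto
  qed
  then have "R \<in> poly_fun {1..n} D"
    unfolding R_def[abs_def] by (intro poly_fun_sum fin finite_exps_upto) (simp add: poly_fun_cmult mult.assoc mult.left_commute[of "(-1)^(k - 1)"])
  moreover have "D \<le> 2 * n - 3"
    using s i True unfolding D_def by auto
  moreover have "christoffel_X n a k s i = R a" if a: "distinct_on n a" for a
  proof -
    have "christoffel_X n a k s i = (\<Sum>\<alpha>\<in>exps_upto {0..n} D. cW \<alpha> *
        (\<Sum>d\<in>{1..n}. esym_jac_inv n a k d * monomial_on {0..n} \<alpha> (a(0 := a d))))"
      unfolding christoffel_X_eq_sum_christoffel_W[OF True] cW sum_distrib_left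
      by (subst sum.swap) (simp add: mult.left_commute)
    then show ?thesis
      unfolding sum_esym_jac_inv_monomial_on R_def divdiff[OF a] .
  qed
  ultimately show ?thesis
    using poly_fun_mono[OF fin(1)] by blast
qed

theorem mainTheorem11:
  fixes n s i k :: nat
  assumes "n \<ge> 2" and "s \<in> {1..n}" and "i \<in> {1..n}" and "k \<in> {1..n}"
  shows "\<exists>c :: (nat \<Rightarrow> nat) \<Rightarrow> complex. \<forall>p. generic n p \<longrightarrow>
           GamC n s i k (\<lambda>m. uC n m p) =
             (\<Sum>\<alpha>\<in>exps_below n (4*n - 4). c \<alpha> * (\<Prod>j=1..n. (p j) ^ \<alpha> j))"
proof -
  obtain R where R: "R \<in> poly_fun {1..n} (2 * n - 3)"
    and X: "\<And>a. distinct_on n a \<Longrightarrow> christoffel_X n a k s i = R a"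
    using christoffel_X_poly_fun[OF assms] by blast
  have "(\<lambda>p. R (\<lambda>j. p j ^ 2)) \<in> poly_fun {1..n} (4 * n - 5)"
    using poly_fun_mono[OF _ _ poly_fun_compose_square[OF _ R]] assms(1) by simp
  then obtain c where c: "\<And>p. R (\<lambda>j. p j ^ 2) = (\<Sum>\<alpha>\<in>exps_upto {1..n} (4 * n - 5). c \<alpha> * monomial_on {1..n} \<alpha> p)"
    unfolding poly_fun_def by blast
  have "exps_upto {1..n} (4 * n - 5) = exps_below n (4 * n - 4)"
    using assms(1) by (auto simp: exps_upto_def exps_below_def)
  moreover have "GamC n s i k (\<lambda>m. uC n m p) = R (\<lambda>j. p j ^ 2)" if "generic n p" for p
  proof -
    have "distinct_on n (\<lambda>j. p j ^ 2)" "nonzero_on n (\<lambda>j. p j ^ 2)"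
      using that by (auto simp: generic_def distinct_on_def nonzero_on_def)
    then show ?thesis
      using GamC_eq_christoffel_X[OF assms(1) _ _ assms(2-4)] X by (simp add: uC_eq_esym)
  qed
  ultimately show ?thesis
    using c by (auto simp: monomial_on_def)
qed

end
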